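(* Let $\mathbb Z\langle X\rangle$ be the free unital associative ring on $X=\{x_1,x_2,\dots\}$ and let $T^{(4)}$ be its two-sided ideal generated by all $[a_1,a_2,a_3,a_4]$ ($a_i\in\mathbb Z\langle X\rangle$). Then $T^{(4)}$ is generated as a left ideal of $\mathbb Z\langle X\rangle$ by the polynomials \begin{gather*} [x_{i_1},x_{i_2},\dots,x_{i_k}]\quad(k\ge4,\ i_l\in\mathbb N),\qquad [x_{i_1},x_{i_2},x_{i_3}][x_{i_4},x_{i_5},x_{i_6}]\quad(i_l\in\mathbb N),\\ [x_{i_1},x_{i_2}][x_{i_3},x_{i_4},x_{i_5}]-\operatorname{sgn}(\sigma)[x_{i_{\sigma(1)}},x_{i_{\sigma(2)}}][x_{i_{\sigma(3)}},x_{i_{\sigma(4)}},x_{i_{\sigma(5)}}]\quad(i_l\in\mathbb N,\ \sigma\in S_5),\\ [x_{i_1},x_{i_2}][x_{i_3},x_{i_4}][x_{i_5},x_{i_6}]-\operatorname{sgn}(\sigma)[x_{i_{\sigma(1)}},x_{i_{\sigma(2)}}][x_{i_{\sigma(3)}},x_{i_{\sigma(4)}}][x_{i_{\sigma(5)}},x_{i_{\sigma(6)}}]\quad(i_l\in\mathbb N,\ \sigma\in S_6). \end{gather*}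
   Context: Commutators are left-normed: $[a,b]=ab-ba$, $[a_1,\dots,a_n]=[[a_1,\dots,a_{n-1}],a_n]$. *)

theory Defs
  imports "HOL-Library.Poly_Mapping" "HOL-Combinatorics.Permutations"
begin

text \<open>Words over the alphabet X = {x_0, x_1, ...} (indexed by nat); the free monoid,
  with concatenation written as +.\<close>
datatype word = Word "nat list"

instantiation word :: monoid_add
begin
fun plus_word :: "word \<Rightarrow> word \<Rightarrow> word" where
  "plus_word (Word u) (Word v) = Word (u @ v)"
definition zero_word :: word where "zero_word = Word []"
instance
proof
  fix a b c :: word
  show "a + b + c = a + (b + c)" by (cases a; cases b; cases c) simp
  show "0 + a = a" by (cases a) (simp add: zero_word_def)
  show "a + 0 = a" by (cases a) (simp add: zero_word_def)
qed
end

text \<open>The free unital associative ring Z<X>: the monoid ring Z[free monoid on X],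
  i.e. finitely supported functions words -> int with convolution product.\<close>
type_synonym fring = "word \<Rightarrow>\<^sub>0 int"

definition var :: "nat \<Rightarrow> fring" where
  "var i = Poly_Mapping.single (Word [i]) 1"

definition comm :: "'a::ring \<Rightarrow> 'a \<Rightarrow> 'a" where
  "comm a b = a * b - b * a"

fun lcomm :: "'a::ring list \<Rightarrow> 'a" where
  "lcomm [] = 0"
| "lcomm (a # as) = foldl comm a as"

inductive_set ideal_gen :: "'a::ring_1 set \<Rightarrow> 'a set" for S where
  base: "a \<in> S \<Longrightarrow> a \<in> ideal_gen S"
| zero: "0 \<in> ideal_gen S"
| add: "a \<in> ideal_gen S \<Longrightarrow> b \<in> ideal_gen S \<Longrightarrow> a + b \<in> ideal_gen S"
| lmult: "a \<in> ideal_gen S \<Longrightarrow> r * a \<in> ideal_gen S"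
| rmult: "a \<in> ideal_gen S \<Longrightarrow> a * r \<in> ideal_gen S"

inductive_set left_ideal_gen :: "'a::ring_1 set \<Rightarrow> 'a set" for S where
  base: "a \<in> S \<Longrightarrow> a \<in> left_ideal_gen S"
| zero: "0 \<in> left_ideal_gen S"
| add: "a \<in> left_ideal_gen S \<Longrightarrow> b \<in> left_ideal_gen S \<Longrightarrow> a + b \<in> left_ideal_gen S"
| lmult: "a \<in> left_ideal_gen S \<Longrightarrow> r * a \<in> left_ideal_gen S"

definition T4 :: "fring set" where
  "T4 = ideal_gen {lcomm [a1, a2, a3, a4] | a1 a2 a3 a4. True}"

definition gens :: "fring set" where
  "gens =
     {lcomm (map var is) | is. length is \<ge> 4}
   \<union> {lcomm [var (i 0), var (i 1), var (i 2)] * lcomm [var (i 3), var (i 4), var (i 5)]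
       | i :: nat \<Rightarrow> nat. True}
   \<union> {lcomm [var (i 0), var (i 1)] * lcomm [var (i 2), var (i 3), var (i 4)]
       - of_int (sign \<sigma>) *
         (lcomm [var (i (\<sigma> 0)), var (i (\<sigma> 1))] *
          lcomm [var (i (\<sigma> 2)), var (i (\<sigma> 3)), var (i (\<sigma> 4))])
       | (i :: nat \<Rightarrow> nat) \<sigma>. \<sigma> permutes {..<5::nat}}
   \<union> {lcomm [var (i 0), var (i 1)] * lcomm [var (i 2), var (i 3)] * lcomm [var (i 4), var (i 5)]
       - of_int (sign \<sigma>) *
         (lcomm [var (i (\<sigma> 0)), var (i (\<sigma> 1))] * lcomm [var (i (\<sigma> 2)), var (i (\<sigma> 3))] *
          lcomm [var (i (\<sigma> 4)), var (i (\<sigma> 5))])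
       | (i :: nat \<Rightarrow> nat) \<sigma>. \<sigma> permutes {..<6::nat}}"

end

theory Submission
  imports Defs
begin

text \<open>
  For \<open>T4 \<subseteq> L\<close>, where \<open>L\<close> is the left ideal generated by \<open>gens\<close>: right multiplication by a
  variable maps every generator back into \<open>L\<close>, so \<open>L\<close> is two-sided and \<open>Z<X>/L\<close> is a ring.
  There the images of the variables satisfy the four families of identities (vanishing of
  \<open>[a,b,c,d]\<close> and \<open>[a,b,c][d,e,f]\<close>, sign-alternation of \<open>[a,b][c,d,e]\<close> and
  \<open>[a,b][c,d][e,f]\<close>), and an induction on the total degree, splitting off one letter of a
  monomial at a time, extends all four simultaneously to arbitrary monomials; by
  multilinearity every \<open>[a,b,c,d]\<close> then lies in \<open>L\<close>.
  For \<open>L \<subseteq> T4\<close>, the same identities hold for all elements of any ring satisfying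
  \<open>[a,b,c,d] = 0\<close>, by direct commutator calculus; apply this to \<open>Z<X>/T4\<close>.
\<close>

section \<open>Commutator calculus\<close>

abbreviation comm3 :: "'a::ring \<Rightarrow> 'a \<Rightarrow> 'a \<Rightarrow> 'a" where
  "comm3 a b c \<equiv> comm (comm a b) c"
abbreviation comm4 :: "'a::ring \<Rightarrow> 'a \<Rightarrow> 'a \<Rightarrow> 'a \<Rightarrow> 'a" where
  "comm4 a b c d \<equiv> comm (comm3 a b c) d"

definition pc23 :: "'a::ring \<Rightarrow> 'a \<Rightarrow> 'a \<Rightarrow> 'a \<Rightarrow> 'a \<Rightarrow> 'a" where
  "pc23 a b c d e = comm a b * comm3 c d e"
definition pc33 :: "'a::ring \<Rightarrow> 'a \<Rightarrow> 'a \<Rightarrow> 'a \<Rightarrow> 'a \<Rightarrow> 'a \<Rightarrow> 'a" where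
  "pc33 a b c d e g = comm3 a b c * comm3 d e g"
definition pc222 :: "'a::ring \<Rightarrow> 'a \<Rightarrow> 'a \<Rightarrow> 'a \<Rightarrow> 'a \<Rightarrow> 'a \<Rightarrow> 'a" where
  "pc222 a b c d e g = comm a b * comm c d * comm e g"
definition pc223 :: "'a::ring \<Rightarrow> 'a \<Rightarrow> 'a \<Rightarrow> 'a \<Rightarrow> 'a \<Rightarrow> 'a \<Rightarrow> 'a \<Rightarrow> 'a" where
  "pc223 u b c d e g v = comm u b * pc23 c d e g v"

definition pc23_tup :: "(nat \<Rightarrow> 'a::ring) \<Rightarrow> 'a" where
  "pc23_tup y = pc23 (y 0) (y 1) (y 2) (y 3) (y 4)"
definition pc222_tup :: "(nat \<Rightarrow> 'a::ring) \<Rightarrow> 'a" where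
  "pc222_tup y = pc222 (y 0) (y 1) (y 2) (y 3) (y 4) (y 5)"

lemma comm_zero [simp]: "comm 0 x = 0" "comm x 0 = 0"
  by (simp_all add: comm_def)

lemma comm_one [simp]: "comm 1 (x::'a::ring_1) = 0" "comm x (1::'a) = 0"
  by (simp_all add: comm_def)

lemma comm_comm: "comm p (comm c d) = comm (comm p c) d - comm (comm p d) (c::'a::ring)"
  by (simp add: comm_def algebra_simps)

lemma comm_mult_left: "comm (u * v) (b::'a::ring) = u * comm v b + comm u b * v"
  by (simp add: comm_def algebra_simps)

lemma pc23_swap01: "pc23 b a c d e = - pc23 a (b::'a::ring) c d e"
  by (simp add: pc23_def comm_def algebra_simps)
lemma pc23_swap23: "pc23 a b d c e = - pc23 a b c (d::'a::ring) e"
  by (simp add: pc23_def comm_def algebra_simps)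
lemma pc33_swap01: "pc33 b a c d e g = - pc33 a (b::'a::ring) c d e g"
  by (simp add: pc33_def comm_def algebra_simps)
lemma pc222_swap01: "pc222 b a c d e g = - pc222 a (b::'a::ring) c d e g"
  by (simp add: pc222_def comm_def algebra_simps)
lemma pc222_swap45: "pc222 a b c d g e = - pc222 a b c d e (g::'a::ring)"
  by (simp add: pc222_def comm_def algebra_simps)

lemma pc23_tup_transpose01: "pc23_tup (y \<circ> transpose 0 1) = - pc23_tup (y::nat \<Rightarrow> 'a::ring)"
  by (simp add: pc23_tup_def transpose_def pc23_def comm_def algebra_simps)
lemma pc23_tup_transpose23: "pc23_tup (y \<circ> transpose 2 3) = - pc23_tup (y::nat \<Rightarrow> 'a::ring)"
  by (simp add: pc23_tup_def transpose_def pc23_def comm_def algebra_simps)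
lemma pc222_tup_transpose01: "pc222_tup (y \<circ> transpose 0 1) = - pc222_tup (y::nat \<Rightarrow> 'a::ring)"
  by (simp add: pc222_tup_def transpose_def pc222_def comm_def algebra_simps)
lemma pc222_tup_transpose23: "pc222_tup (y \<circ> transpose 2 3) = - pc222_tup (y::nat \<Rightarrow> 'a::ring)"
  by (simp add: pc222_tup_def transpose_def pc222_def comm_def algebra_simps)
lemma pc222_tup_transpose45: "pc222_tup (y \<circ> transpose 4 5) = - pc222_tup (y::nat \<Rightarrow> 'a::ring)"
  by (simp add: pc222_tup_def transpose_def pc222_def comm_def algebra_simps)

lemma comm4_swap01: "comm4 b a c d = - comm4 a (b::'a::ring) c d"
  by (simp add: comm_def algebra_simps)

lemma comm4_diff0: "comm4 (a - a') b c (d::'a::ring) = comm4 a b c d - comm4 a' b c d"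
  by (simp add: comm_def algebra_simps)
lemma comm4_diff1: "comm4 a (b - b') c (d::'a::ring) = comm4 a b c d - comm4 a b' c d"
  by (simp add: comm_def algebra_simps)
lemma comm4_diff2: "comm4 a b (c - c') (d::'a::ring) = comm4 a b c d - comm4 a b c' d"
  by (simp add: comm_def algebra_simps)
lemma comm4_diff3: "comm4 a b c (d - d'::'a::ring) = comm4 a b c d - comm4 a b c d'"
  by (simp add: comm_def algebra_simps)

text \<open>In the induction on degree, every term of the following expansions except the first
  two vanishes or cancels.\<close>

lemma comm4_mult0:
  "comm4 (u * v) b c (d::'a::ring) = u * comm4 v b c d + comm4 u b c d * v
   + (pc23 u d v b c + pc23 u c v b d) + (pc23 u b v c d + pc23 v b u c d)
   + (pc23 v d u b c + pc23 v c u b d)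
   + (comm (comm4 u c d v) b - comm (comm4 u c d b) v + comm (comm4 u b c v) d
      - comm (comm4 u b c d) v + comm (comm4 u b d v) c - comm (comm4 u b d c) v)"
  by (simp add: pc23_def comm_def algebra_simps)
lemma comm4_mult2:
  "comm4 a b (u * v) (d::'a::ring) = u * comm4 a b v d + comm4 a b u d * v
   + (pc23 u d a b v + pc23 v d a b u) + comm (comm4 a b u v) d - comm (comm4 a b u d) v"
  by (simp add: pc23_def comm_def algebra_simps)
lemma comm4_mult3: "comm4 a b c (u * v::'a::ring) = u * comm4 a b c v + comm4 a b c u * v"
  by (simp add: comm_def algebra_simps)

lemma pc23_mult0:
  "pc23 (u * v) q r s (t::'a::ring) = u * pc23 v q r s t + pc23 u q r s t * v - comm u q * comm4 r s t v"
  by (simp add: pc23_def comm_def algebra_simps)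
lemma pc23_mult2:
  "pc23 p q (u * v) s (t::'a::ring) = u * pc23 p q v s t + pc23 p q u s t * v + pc33 p q u v s t
   + (pc222 p q u t v s + pc222 p q u s v t)"
  by (simp add: pc23_def pc33_def pc222_def comm_def algebra_simps)
lemma pc23_mult4:
  "pc23 p q r s (u * v::'a::ring) = u * pc23 p q r s v + pc23 p q r s u * v + pc33 p q u r s v"
  by (simp add: pc23_def pc33_def comm_def algebra_simps)

lemma pc33_mult0:
  "pc33 (u * v) b c d e (g::'a::ring) = u * pc33 v b c d e g + pc33 u b c d e g * v
   - comm3 u b c * comm4 d e g v + (comm v b * pc23 u c d e g + comm u b * pc23 v c d e g)
   + (comm4 u c v b - comm4 u c b v) * comm3 d e g"
  by (simp add: pc33_def pc23_def comm_def algebra_simps)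
lemma pc33_mult2:
  "pc33 a b (u * v) d e (g::'a::ring) = u * pc33 a b v d e g + pc33 a b u d e g * v
   - comm3 a b u * comm4 d e g v"
  by (simp add: pc33_def comm_def algebra_simps)
lemma pc33_mult5:
  "pc33 a b c d e (u * v::'a::ring) = u * pc33 a b c d e v + pc33 a b c d e u * v
   + comm4 a b c u * comm3 d e v"
  by (simp add: pc33_def comm_def algebra_simps)
lemma pc33_commute:
  "pc33 a b c d e (g::'a::ring) = pc33 d e g a b c
   + (comm (comm (comm4 a b c d) e) g - comm (comm (comm4 a b c e) d) g - comm (comm4 a b c g) (comm d e))"
  by (simp add: pc33_def comm_def algebra_simps)

lemma pc222_mult0:
  "pc222 (u * v) b c d e (g::'a::ring) = u * pc222 v b c d e g + pc222 u b c d e g * v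
   - comm u b * (pc23 e g c d v + pc23 c d e g v)
   - comm u b * (comm (comm4 c d v e) g - comm (comm4 c d v g) e)"
  by (simp add: pc222_def pc23_def comm_def algebra_simps)
lemma pc222_commute12:
  "pc222 a b c d e (g::'a::ring) = pc222 c d a b e g + comm (comm a b) (comm c d) * comm e g"
  by (simp add: pc222_def comm_def algebra_simps)
lemma pc222_commute23:
  "pc222 a b c d e (g::'a::ring) = pc222 a b e g c d + comm a b * comm (comm c d) (comm e g)"
  by (simp add: pc222_def comm_def algebra_simps)
lemma pc222_rotate:
  "pc222 a b c d e (g::'a::ring) = pc222 e g a b c d
   + (comm a b * comm (comm c d) (comm e g) + comm (comm a b) (comm e g) * comm c d)"
  by (simp add: pc222_def comm_def algebra_simps)

lemma comm_mult_pc23_antisym: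
  fixes u v b c d e g :: "'a::ring"
  assumes f1: "pc23 u c d e g = - pc23 d c u e g" and f2: "pc23 v b u e g = - pc23 u b v e g"
    and f3: "pc23 d c v e g = - pc23 v c d e g"
    and k1: "comm (comm v b) (comm d c) = 0" and k2: "comm (comm d c) (comm u b) = 0"
  shows "comm v b * pc23 u c d e g = - (comm u b * pc23 v c d e g)"
proof -
  have k1': "comm v b * comm d c = comm d c * comm v b" using k1 by (simp add: comm_def)
  have k2': "comm d c * comm u b = comm u b * comm d c" using k2 by (simp add: comm_def)
  have "comm v b * pc23 u c d e g = - (comm v b * comm d c * comm3 u e g)"
    unfolding f1 by (simp add: pc23_def mult.assoc)
  also have "\<dots> = - (comm d c * pc23 v b u e g)" by (simp add: k1' pc23_def mult.assoc)
  also have "\<dots> = comm d c * comm u b * comm3 v e g" unfolding f2 by (simp add: pc23_def mult.assoc)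
  also have "\<dots> = comm u b * pc23 d c v e g" by (simp add: k2' pc23_def mult.assoc)
  also have "\<dots> = - (comm u b * pc23 v c d e g)" unfolding f3 by simp
  finally show ?thesis .
qed

lemma pc223_antisym13:
  fixes u b c d e g v :: "'a::ring"
  assumes f1: "pc23 d c e g v = - pc23 e c d g v" and f2: "pc23 b u d g v = - pc23 d u b g v"
    and f3: "pc23 e c b g v = - pc23 b c e g v"
    and k1: "comm (comm b u) (comm e c) = 0" and k2: "comm (comm e c) (comm d u) = 0"
  shows "pc223 u b c d e g v + pc223 u d c b e g v = 0"
proof -
  have r: "comm b u * pc23 d c e g v = - (comm d u * pc23 b c e g v)"
    by (rule comm_mult_pc23_antisym[OF f1 f2 f3 k1 k2])
  have "pc223 u b c d e g v = comm b u * pc23 d c e g v"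
    by (simp add: pc223_def pc23_def comm_def algebra_simps)
  moreover have "pc223 u d c b e g v = comm d u * pc23 b c e g v"
    by (simp add: pc223_def pc23_def comm_def algebra_simps)
  ultimately show ?thesis using r by simp
qed

lemma pc223_antisym12:
  fixes u a c d e g v :: "'a::ring"
  assumes f1: "pc23 c d e g v = - pc23 e d c g v" and f2: "pc23 a u c g v = - pc23 c u a g v"
    and f3: "pc23 e d a g v = - pc23 a d e g v"
    and k1: "comm (comm a u) (comm e d) = 0" and k2: "comm (comm e d) (comm c u) = 0"
  shows "pc223 u a c d e g v + pc223 u c a d e g v = 0"
proof -
  have r: "comm a u * pc23 c d e g v = - (comm c u * pc23 a d e g v)"
    by (rule comm_mult_pc23_antisym[OF f1 f2 f3 k1 k2])
  have "pc223 u a c d e g v = - (comm a u * pc23 c d e g v)"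
    by (simp add: pc223_def pc23_def comm_def algebra_simps)
  moreover have "pc223 u c a d e g v = - (comm c u * pc23 a d e g v)"
    by (simp add: pc223_def pc23_def comm_def algebra_simps)
  ultimately show ?thesis using r by simp
qed

section \<open>Sign behaviour under permutations of the arguments\<close>

definition add_subgroup :: "'b::ring_1 set \<Rightarrow> bool" where
  "add_subgroup S \<longleftrightarrow> 0 \<in> S \<and> (\<forall>a\<in>S. \<forall>b\<in>S. a + b \<in> S) \<and> (\<forall>a\<in>S. - a \<in> S)"

definition perm_sign_mod ::
    "'b::ring_1 set \<Rightarrow> ((nat \<Rightarrow> 'x) \<Rightarrow> 'b) \<Rightarrow> int \<Rightarrow> (nat \<Rightarrow> nat) \<Rightarrow> bool" where
  "perm_sign_mod S \<Phi> s \<rho> \<longleftrightarrow> (\<forall>y. \<Phi> (y \<circ> \<rho>) - of_int s * \<Phi> y \<in> S)"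

lemma add_subgroup_zero: "add_subgroup {0}"
  unfolding add_subgroup_def by auto

lemma perm_sign_mod_zero_iff: "perm_sign_mod {0} \<Phi> s \<rho> \<longleftrightarrow> (\<forall>y. \<Phi> (y \<circ> \<rho>) = of_int s * \<Phi> y)"
  unfolding perm_sign_mod_def by simp

lemma perm_sign_mod_zero_antiI:
  "(\<And>y. \<Phi> (y \<circ> \<rho>) + \<Phi> y = 0) \<Longrightarrow> perm_sign_mod {0} \<Phi> (-1) \<rho>"
  by (simp add: perm_sign_mod_zero_iff eq_neg_iff_add_eq_0)

lemma perm_sign_mod_zero_negI:
  "(\<And>y. \<Phi> (y \<circ> \<rho>) = - \<Phi> y) \<Longrightarrow> perm_sign_mod {0} \<Phi> (-1) \<rho>"
  by (simp add: perm_sign_mod_zero_iff)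

lemma perm_sign_mod_comp:
  assumes S: "add_subgroup S" and st: "s \<in> {1,-1}" "t \<in> {1,-1}"
    and \<rho>: "perm_sign_mod S \<Phi> s \<rho>" and \<tau>: "perm_sign_mod S \<Phi> t \<tau>"
  shows "perm_sign_mod S \<Phi> (s * t) (\<rho> \<circ> \<tau>)"
  unfolding perm_sign_mod_def
proof
  fix y
  have a: "\<Phi> ((y \<circ> \<rho>) \<circ> \<tau>) - of_int t * \<Phi> (y \<circ> \<rho>) \<in> S"
    using \<tau> unfolding perm_sign_mod_def by blast
  have "\<Phi> (y \<circ> \<rho>) - of_int s * \<Phi> y \<in> S"
    using \<rho> unfolding perm_sign_mod_def by blast
  then have b: "of_int t * (\<Phi> (y \<circ> \<rho>) - of_int s * \<Phi> y) \<in> S"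
    using S st(2) unfolding add_subgroup_def by auto
  have "of_int (s * t) * \<Phi> y = of_int t * (of_int s * \<Phi> y)"
    by (simp only: mult.commute[of s t] of_int_mult mult.assoc)
  then have "\<Phi> (y \<circ> (\<rho> \<circ> \<tau>)) - of_int (s * t) * \<Phi> y
     = (\<Phi> ((y \<circ> \<rho>) \<circ> \<tau>) - of_int t * \<Phi> (y \<circ> \<rho>)) + of_int t * (\<Phi> (y \<circ> \<rho>) - of_int s * \<Phi> y)"
    by (simp add: comp_assoc right_diff_distrib)
  with a b S show "\<Phi> (y \<circ> (\<rho> \<circ> \<tau>)) - of_int (s * t) * \<Phi> y \<in> S"
    unfolding add_subgroup_def by auto
qed

lemma perm_sign_mod_conj:
  assumes S: "add_subgroup S" and s: "s \<in> {1,-1}"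
    and \<rho>: "perm_sign_mod S \<Phi> s \<rho>" and \<tau>: "perm_sign_mod S \<Phi> (-1) \<tau>"
    and eq: "\<rho> \<circ> \<tau> \<circ> \<rho> = \<tau>'"
  shows "perm_sign_mod S \<Phi> (-1) \<tau>'"
proof -
  have "perm_sign_mod S \<Phi> (s * -1) (\<rho> \<circ> \<tau>)"
    by (rule perm_sign_mod_comp[OF S s _ \<rho> \<tau>]) simp
  then have "perm_sign_mod S \<Phi> ((s * -1) * s) (\<rho> \<circ> \<tau> \<circ> \<rho>)"
    by (intro perm_sign_mod_comp[OF S _ s _ \<rho>]) (use s in auto)
  moreover have "(s * -1) * s = -1" using s by auto
  ultimately show ?thesis using eq by simp
qed

lemma sign_in_pm1: "sign p \<in> {1, -1::int}"
  by (simp add: sign_def)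

lemma perm_sign_mod_permutes:
  assumes S: "add_subgroup S"
    and tr: "\<And>i j. i < n \<Longrightarrow> j < n \<Longrightarrow> i \<noteq> j \<Longrightarrow> perm_sign_mod S \<Phi> (-1) (transpose i j)"
    and \<sigma>: "\<sigma> permutes {..<n}"
  shows "perm_sign_mod S \<Phi> (sign \<sigma>) \<sigma>"
  using \<sigma> finite_lessThan
proof (induction \<sigma> rule: permutes_induct)
  case id
  show ?case using S unfolding perm_sign_mod_def add_subgroup_def by simp
next
  case (swap a b p)
  have "perm_sign_mod S \<Phi> (-1 * sign p) (transpose a b \<circ> p)"
    by (rule perm_sign_mod_comp[OF S _ sign_in_pm1 tr swap.IH]) (use swap in auto)
  moreover have "sign (transpose a b \<circ> p) = -1 * sign p"
  proof -
    have "permutation p" using swap(4) permutes_imp_permutation by blast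
    then show ?thesis using swap(3) by (simp add: sign_compose permutation_swap_id sign_swap_id)
  qed
  ultimately show ?case unfolding comp_def by simp
qed

lemma perm_sign_mod_transpose_commute:
  "perm_sign_mod S \<Phi> s (transpose i j) \<Longrightarrow> perm_sign_mod S \<Phi> s (transpose j i)"
  by (simp add: transpose_commute)

lemma less_5_cases: "(i::nat) < 5 \<Longrightarrow> i = 0 \<or> i = 1 \<or> i = 2 \<or> i = 3 \<or> i = 4"
  by auto
lemma less_6_cases: "(i::nat) < 6 \<Longrightarrow> i = 0 \<or> i = 1 \<or> i = 2 \<or> i = 3 \<or> i = 4 \<or> i = 5"
  by auto

lemma perm_sign_mod_S5:
  assumes S: "add_subgroup S"
    and t01: "perm_sign_mod S \<Phi> (-1) (transpose 0 1)"
    and t23: "perm_sign_mod S \<Phi> (-1) (transpose 2 3)"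
    and t04: "perm_sign_mod S \<Phi> (-1) (transpose 0 4)"
    and t02: "perm_sign_mod S \<Phi> (-1) (transpose 0 2)"
    and \<sigma>: "\<sigma> permutes {..<5}"
  shows "perm_sign_mod S \<Phi> (sign \<sigma>) \<sigma>"
proof (rule perm_sign_mod_permutes[OF S _ \<sigma>])
  have m: "(-1::int) \<in> {1,-1}" by auto
  note conj = perm_sign_mod_conj[OF S m]
  have t14: "perm_sign_mod S \<Phi> (-1) (transpose 1 4)"
    by (rule conj[OF t01 t04]) (auto simp: fun_eq_iff transpose_def)
  have t12: "perm_sign_mod S \<Phi> (-1) (transpose 1 2)"
    by (rule conj[OF t01 t02]) (auto simp: fun_eq_iff transpose_def)
  have t24: "perm_sign_mod S \<Phi> (-1) (transpose 2 4)"
    by (rule conj[OF t02 t04]) (auto simp: fun_eq_iff transpose_def)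
  have t03: "perm_sign_mod S \<Phi> (-1) (transpose 0 3)"
    by (rule conj[OF t23 t02]) (auto simp: fun_eq_iff transpose_def)
  have t13: "perm_sign_mod S \<Phi> (-1) (transpose 1 3)"
    by (rule conj[OF t01 t03]) (auto simp: fun_eq_iff transpose_def)
  have t34: "perm_sign_mod S \<Phi> (-1) (transpose 3 4)"
    by (rule conj[OF t23 t24]) (auto simp: fun_eq_iff transpose_def)
  note all = t01 t02 t03 t04 t12 t13 t14 t23 t24 t34
  fix i j :: nat assume ij: "i < 5" "j < 5" "i \<noteq> j"
  from less_5_cases[OF ij(1)] less_5_cases[OF ij(2)] ij(3)
  show "perm_sign_mod S \<Phi> (-1) (transpose i j)"
    by (elim disjE) (simp_all add: all[simplified] all[THEN perm_sign_mod_transpose_commute, simplified])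
qed

text \<open>\<open>S\<^sub>6\<close> is generated by the transpositions inside the pairs \<open>{0,1}, {2,3}, {4,5}\<close>,
  the transposition \<open>(1 3)\<close> and the pair swap \<open>(2 4)(3 5)\<close>: exactly the symmetries of
  \<open>[a,b][c,d][e,f]\<close> that are visible one at a time.\<close>

lemma perm_sign_mod_S6:
  assumes S: "add_subgroup S"
    and t01: "perm_sign_mod S \<Phi> (-1) (transpose 0 1)"
    and t23: "perm_sign_mod S \<Phi> (-1) (transpose 2 3)"
    and t45: "perm_sign_mod S \<Phi> (-1) (transpose 4 5)"
    and t13: "perm_sign_mod S \<Phi> (-1) (transpose 1 3)"
    and swap: "perm_sign_mod S \<Phi> 1 (transpose 2 4 \<circ> transpose 3 5)"
    and \<sigma>: "\<sigma> permutes {..<6}"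
  shows "perm_sign_mod S \<Phi> (sign \<sigma>) \<sigma>"
proof (rule perm_sign_mod_permutes[OF S _ \<sigma>])
  have m: "(-1::int) \<in> {1,-1}" "(1::int) \<in> {1,-1}" by auto
  note conj = perm_sign_mod_conj[OF S m(1)] and conj_swap = perm_sign_mod_conj[OF S m(2) swap]
  have t03: "perm_sign_mod S \<Phi> (-1) (transpose 0 3)"
    by (rule conj[OF t01 t13]) (auto simp: fun_eq_iff transpose_def)
  have t12: "perm_sign_mod S \<Phi> (-1) (transpose 1 2)"
    by (rule conj[OF t23 t13]) (auto simp: fun_eq_iff transpose_def)
  have t02: "perm_sign_mod S \<Phi> (-1) (transpose 0 2)"
    by (rule conj[OF t01 t12]) (auto simp: fun_eq_iff transpose_def)
  have t04: "perm_sign_mod S \<Phi> (-1) (transpose 0 4)"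
    by (rule conj_swap[OF t02]) (auto simp: fun_eq_iff transpose_def)
  have t05: "perm_sign_mod S \<Phi> (-1) (transpose 0 5)"
    by (rule conj_swap[OF t03]) (auto simp: fun_eq_iff transpose_def)
  have t14: "perm_sign_mod S \<Phi> (-1) (transpose 1 4)"
    by (rule conj_swap[OF t12]) (auto simp: fun_eq_iff transpose_def)
  have t15: "perm_sign_mod S \<Phi> (-1) (transpose 1 5)"
    by (rule conj_swap[OF t13]) (auto simp: fun_eq_iff transpose_def)
  have t24: "perm_sign_mod S \<Phi> (-1) (transpose 2 4)"
    by (rule conj[OF t02 t04]) (auto simp: fun_eq_iff transpose_def)
  have t25: "perm_sign_mod S \<Phi> (-1) (transpose 2 5)"
    by (rule conj[OF t02 t05]) (auto simp: fun_eq_iff transpose_def)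
  have t34: "perm_sign_mod S \<Phi> (-1) (transpose 3 4)"
    by (rule conj[OF t03 t04]) (auto simp: fun_eq_iff transpose_def)
  have t35: "perm_sign_mod S \<Phi> (-1) (transpose 3 5)"
    by (rule conj[OF t03 t05]) (auto simp: fun_eq_iff transpose_def)
  note all = t01 t02 t03 t04 t05 t12 t13 t14 t15 t23 t24 t25 t34 t35 t45
  fix i j :: nat assume ij: "i < 6" "j < 6" "i \<noteq> j"
  from less_6_cases[OF ij(1)] less_6_cases[OF ij(2)] ij(3)
  show "perm_sign_mod S \<Phi> (-1) (transpose i j)"
    by (elim disjE) (simp_all add: all[simplified] all[THEN perm_sign_mod_transpose_commute, simplified])
qed

lemma sum_lessThan_5: "(\<Sum>k<5::nat. f k) = f 0 + f 1 + f 2 + f 3 + (f 4 :: 'a::comm_monoid_add)"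
  by (simp add: numeral_eq_Suc lessThan_Suc add.commute add.left_commute)
lemma sum_lessThan_6: "(\<Sum>k<6::nat. f k) = f 0 + f 1 + f 2 + f 3 + f 4 + (f 5 :: 'a::comm_monoid_add)"
  by (simp add: numeral_eq_Suc lessThan_Suc add.commute add.left_commute)

lemma sign_transpose_comp_transpose:
  "a \<noteq> b \<Longrightarrow> c \<noteq> d \<Longrightarrow> sign (transpose a b \<circ> transpose c d) = 1"
  by (simp add: sign_compose permutation_swap_id sign_swap_id)

lemma transpose_comp_transpose_permutes:
  "a \<in> S \<Longrightarrow> b \<in> S \<Longrightarrow> c \<in> S \<Longrightarrow> d \<in> S \<Longrightarrow> transpose a b \<circ> transpose c d permutes S"
  by (intro permutes_compose permutes_swap_id)

lemma fun_upd_comp_permutes: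
  assumes "\<sigma> permutes S"
  shows "(y \<circ> \<sigma>)(inv \<sigma> j := v) = y(j := v) \<circ> \<sigma>"
proof
  fix k
  have "\<sigma> k = j \<longleftrightarrow> k = inv \<sigma> j"
    using permutes_inverses[OF assms] by metis
  then show "((y \<circ> \<sigma>)(inv \<sigma> j := v)) k = (y(j := v) \<circ> \<sigma>) k" by auto
qed

lemma sum_lessThan_5_upd: "(j::nat) < 5 \<Longrightarrow> (\<Sum>k<5. (f(j:=v)) k) + f j = (\<Sum>k<5. f k) + (v::nat)"
  by (auto simp: sum_lessThan_5 dest!: less_5_cases)

section \<open>Rings that are Lie nilpotent of class 3\<close>

text \<open>The class axiom is \<open>[a,b,c,d] = 0\<close> written out, since a class specification cannot
  refer to \<open>comm\<close>, whose sort is not the class being defined.\<close>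

class lie_nilpotent3 = ring_1 +
  assumes comm4_expanded_eq_0:
    "((a * b - b * a) * c - c * (a * b - b * a)) * d - d * ((a * b - b * a) * c - c * (a * b - b * a)) = 0"

lemma comm4_eq_0: "comm4 (a::'a::lie_nilpotent3) b c d = 0"
  using comm4_expanded_eq_0[of a b c d] by (simp add: comm_def)

lemma comm_comm_comm_eq_0: "comm (comm (a::'a::lie_nilpotent3) b) (comm c d) = 0"
  by (simp add: comm_comm comm4_eq_0)

lemma comm3_central: "comm3 (a::'a::lie_nilpotent3) b c * x = x * comm3 a b c"
  using comm4_eq_0[of a b c x] unfolding comm_def by simp

lemma pc33_eq_0: "pc33 (a::'a::lie_nilpotent3) b c d e g = 0"
proof -
  define P where "P = comm a b"
  define Q where "Q = comm d e"
  have "pc33 a b c d e g = comm (comm P (c * Q)) g - comm (c * comm P Q) g - comm (comm P c) g * Q"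
    unfolding pc33_def P_def Q_def by (simp add: comm_def algebra_simps)
  moreover have "comm P Q = 0"
    unfolding P_def Q_def by (rule comm_comm_comm_eq_0)
  ultimately show ?thesis
    unfolding P_def by (simp add: comm4_eq_0)
qed

lemma pc23_swap04: "pc23 (c::'a::lie_nilpotent3) e a b d + pc23 d e a b c = 0"
proof -
  have "pc23 c e a b d + pc23 d e a b c = comm4 a b (c * d) e - c * comm4 a b d e - comm4 a b c e * d
      - comm (comm4 a b c d) e + comm (comm4 a b c e) d"
    by (simp add: pc23_def comm_def algebra_simps)
  then show ?thesis by (simp add: comm4_eq_0)
qed

lemma pc23_swap02: "pc23 (a::'a::lie_nilpotent3) c b d e + pc23 b c a d e = 0"
proof -
  have "pc23 a e b c d + pc23 a d b c e = - (pc23 e a b c d + pc23 d a b c e)"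
    and "pc23 b e a c d + pc23 b d a c e = - (pc23 e b a c d + pc23 d b a c e)"
    by (simp_all add: pc23_def comm_def algebra_simps)
  then have e1: "pc23 a e b c d + pc23 a d b c e = 0" and e2: "pc23 b e a c d + pc23 b d a c e = 0"
    by (simp_all add: pc23_swap04)
  have "comm4 (a * b) c d e = a * comm4 b c d e + comm4 a c d e * b
     + (pc23 a e b c d + pc23 a d b c e) + (pc23 b e a c d + pc23 b d a c e)
     + (pc23 a c b d e + pc23 b c a d e)
     + comm (comm4 a d e b) c - comm (comm4 a d e c) b
     + comm (comm4 a c d b) e - comm (comm4 a c d e) b
     + comm (comm4 a c e b) d - comm (comm4 a c e d) b"
    by (simp add: pc23_def comm_def algebra_simps)
  with e1 e2 show ?thesis by (simp add: comm4_eq_0)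
qed

lemma pc23_tup_permute:
  fixes y :: "nat \<Rightarrow> 'a::lie_nilpotent3"
  assumes "\<sigma> permutes {..<5}"
  shows "pc23_tup (y \<circ> \<sigma>) = of_int (sign \<sigma>) * pc23_tup y"
proof -
  let ?F = "pc23_tup :: (nat \<Rightarrow> 'a) \<Rightarrow> 'a"
  have "perm_sign_mod {0} ?F (sign \<sigma>) \<sigma>"
  proof (rule perm_sign_mod_S5[OF add_subgroup_zero _ _ _ _ assms])
    show "perm_sign_mod {0} ?F (-1) (transpose 0 1)"
      by (rule perm_sign_mod_zero_negI) (rule pc23_tup_transpose01)
    show "perm_sign_mod {0} ?F (-1) (transpose 2 3)"
      by (rule perm_sign_mod_zero_negI) (rule pc23_tup_transpose23)
    show "perm_sign_mod {0} ?F (-1) (transpose 0 4)"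
      by (rule perm_sign_mod_zero_antiI) (simp add: pc23_tup_def transpose_def pc23_swap04)
    show "perm_sign_mod {0} ?F (-1) (transpose 0 2)"
      by (rule perm_sign_mod_zero_antiI) (simp add: pc23_tup_def transpose_def pc23_swap02)
  qed
  then show ?thesis by (simp add: perm_sign_mod_zero_iff)
qed

lemma pc222_swap13: "pc222 (a::'a::lie_nilpotent3) b c d e g + pc222 a d c b e g = 0"
proof -
  have swap: "pc23 e g x d b = - pc23 x g e d b" for x :: 'a
    using pc23_swap02[of e g x d b] by (simp add: eq_neg_iff_add_eq_0)
  have w: "pc222 a b c d e g + pc222 a d c b e g
      = comm3 (a * c) d b * comm e g - a * (comm3 c d b * comm e g) - comm3 a d b * c * comm e g"
    by (simp add: pc222_def comm_def algebra_simps)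
  have s1: "comm3 (a * c) d b * comm e g = - pc23 (a * c) g e d b"
    using comm3_central[of "a * c" d b] swap[of "a * c"] by (simp add: pc23_def)
  have s2: "comm3 c d b * comm e g = - pc23 c g e d b"
    using comm3_central[of c d b] swap[of c] by (simp add: pc23_def)
  have s3: "comm3 a d b * c * comm e g = - (c * pc23 a g e d b)"
    using comm3_central[of a d b] swap[of a] by (simp add: pc23_def mult.assoc)
  have s4: "pc23 (a * c) g e d b = a * pc23 c g e d b + pc23 a g e d b * c"
    using comm3_central[of e d b c] by (simp add: pc23_def comm_mult_left algebra_simps)
  have s5: "pc23 a g e d b * c - c * pc23 a g e d b = pc33 a g c e d b + comm a g * comm (comm3 e d b) c"
    by (simp add: pc23_def pc33_def comm_def algebra_simps)
  have "pc222 a b c d e g + pc222 a d c b e g = - (pc23 a g e d b * c - c * pc23 a g e d b)"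
    unfolding w s1 s2 s3 s4 by (simp add: algebra_simps)
  also have "\<dots> = 0"
    unfolding s5 by (simp add: pc33_eq_0 comm4_eq_0)
  finally show ?thesis .
qed

lemma pc222_swap_pairs23: "pc222 a b e g c d = pc222 (a::'a::lie_nilpotent3) b c d e g"
  using pc222_commute23[of a b c d e g] by (simp add: comm_comm_comm_eq_0)

lemma pc222_tup_permute:
  fixes y :: "nat \<Rightarrow> 'a::lie_nilpotent3"
  assumes "\<sigma> permutes {..<6}"
  shows "pc222_tup (y \<circ> \<sigma>) = of_int (sign \<sigma>) * pc222_tup y"
proof -
  let ?F = "pc222_tup :: (nat \<Rightarrow> 'a) \<Rightarrow> 'a"
  have "perm_sign_mod {0} ?F (sign \<sigma>) \<sigma>"
  proof (rule perm_sign_mod_S6[OF add_subgroup_zero _ _ _ _ _ assms])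
    show "perm_sign_mod {0} ?F (-1) (transpose 0 1)"
      by (rule perm_sign_mod_zero_negI) (rule pc222_tup_transpose01)
    show "perm_sign_mod {0} ?F (-1) (transpose 2 3)"
      by (rule perm_sign_mod_zero_negI) (rule pc222_tup_transpose23)
    show "perm_sign_mod {0} ?F (-1) (transpose 4 5)"
      by (rule perm_sign_mod_zero_negI) (rule pc222_tup_transpose45)
    show "perm_sign_mod {0} ?F (-1) (transpose 1 3)"
      by (rule perm_sign_mod_zero_antiI) (simp add: pc222_tup_def transpose_def pc222_swap13)
    show "perm_sign_mod {0} ?F 1 (transpose 2 4 \<circ> transpose 3 5)"
      by (simp add: perm_sign_mod_zero_iff pc222_tup_def transpose_def) (intro allI pc222_swap_pairs23)
  qed
  then show ?thesis by (simp add: perm_sign_mod_zero_iff)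
qed

section \<open>From generators to products of generators\<close>

locale generator_identities =
  fixes X :: "'a::ring_1 set"
  assumes comm4_gens: "\<lbrakk>a \<in> X; b \<in> X; c \<in> X; d \<in> X\<rbrakk> \<Longrightarrow> comm4 a b c d = 0"
    and pc33_gens: "\<lbrakk>a \<in> X; b \<in> X; c \<in> X; d \<in> X; e \<in> X; g \<in> X\<rbrakk> \<Longrightarrow> pc33 a b c d e g = 0"
    and pc23_gens_permute: "(\<forall>k<5. y k \<in> X) \<Longrightarrow> \<sigma> permutes {..<5} \<Longrightarrow>
      pc23_tup (y \<circ> \<sigma>) = of_int (sign \<sigma>) * pc23_tup y"
    and pc222_gens_permute: "(\<forall>k<6. y k \<in> X) \<Longrightarrow> \<sigma> permutes {..<6} \<Longrightarrow>
      pc222_tup (y \<circ> \<sigma>) = of_int (sign \<sigma>) * pc222_tup y"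
begin

inductive gword :: "nat \<Rightarrow> 'a \<Rightarrow> bool" where
  gword_gen: "x \<in> X \<Longrightarrow> gword 1 x"
| gword_Cons: "x \<in> X \<Longrightarrow> gword n w \<Longrightarrow> gword (Suc n) (x * w)"

lemma gword_pos: "gword n w \<Longrightarrow> n \<ge> 1"
  by (induct rule: gword.induct) auto

lemma gword_one: "gword 1 w \<Longrightarrow> w \<in> X"
  by (cases rule: gword.cases) (auto dest: gword_pos)

lemma gword_split: "gword n w \<Longrightarrow> n \<ge> 2 \<Longrightarrow> \<exists>x m. x \<in> X \<and> gword (n - 1) m \<and> w = x * m"
  by (cases rule: gword.cases) force+

text \<open>Within one degree, \<open>pc33\<close> and \<open>pc222\<close>
  come first, \<open>pc23\<close> uses both at the same degree, and \<open>comm4\<close> uses \<open>pc23\<close>.\<close>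

definition comm4_deg :: "nat \<Rightarrow> bool" where
  "comm4_deg N \<longleftrightarrow> (\<forall>a b c d na nb nc nd. gword na a \<longrightarrow> gword nb b \<longrightarrow> gword nc c \<longrightarrow> gword nd d \<longrightarrow>
     na + nb + nc + nd = N \<longrightarrow> comm4 a b c d = 0)"
definition pc33_deg :: "nat \<Rightarrow> bool" where
  "pc33_deg N \<longleftrightarrow> (\<forall>a b c d e g na nb nc nd ne ng. gword na a \<longrightarrow> gword nb b \<longrightarrow> gword nc c \<longrightarrow> gword nd d \<longrightarrow>
     gword ne e \<longrightarrow> gword ng g \<longrightarrow> na + nb + nc + nd + ne + ng = N \<longrightarrow> pc33 a b c d e g = 0)"
definition pc23_deg :: "nat \<Rightarrow> bool" where
  "pc23_deg N \<longleftrightarrow> (\<forall>y dy \<sigma>. (\<forall>k<5. gword (dy k) (y k)) \<longrightarrow> (\<Sum>k<5. dy k) = N \<longrightarrow> \<sigma> permutes {..<5} \<longrightarrow>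
     pc23_tup (y \<circ> \<sigma>) = of_int (sign \<sigma>) * pc23_tup y)"
definition pc222_deg :: "nat \<Rightarrow> bool" where
  "pc222_deg N \<longleftrightarrow> (\<forall>y dy \<sigma>. (\<forall>k<6. gword (dy k) (y k)) \<longrightarrow> (\<Sum>k<6. dy k) = N \<longrightarrow> \<sigma> permutes {..<6} \<longrightarrow>
     pc222_tup (y \<circ> \<sigma>) = of_int (sign \<sigma>) * pc222_tup y)"
definition identities_deg :: "nat \<Rightarrow> bool" where
  "identities_deg N \<longleftrightarrow> comm4_deg N \<and> pc33_deg N \<and> pc23_deg N \<and> pc222_deg N"

lemma comm4_below:
  assumes "\<forall>M<N. identities_deg M" "gword na a" "gword nb b" "gword nc c" "gword nd d" "na + nb + nc + nd < N"
  shows "comm4 a b c d = 0"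
  using assms unfolding identities_deg_def comm4_deg_def by blast

lemma pc33_below:
  assumes "\<forall>M<N. identities_deg M" "gword na a" "gword nb b" "gword nc c" "gword nd d" "gword ne e" "gword ng g"
    "na + nb + nc + nd + ne + ng < N"
  shows "pc33 a b c d e g = 0"
  using assms unfolding identities_deg_def pc33_deg_def by blast

lemma pc23_deg_permute:
  assumes F: "pc23_deg M" and "gword na a" "gword nb b" "gword nc c" "gword nd d" "gword ne e"
      "na + nb + nc + nd + ne = M"
    and \<sigma>: "\<sigma> permutes {..<5}"
  shows "pc23_tup ((!) [a,b,c,d,e] \<circ> \<sigma>) = of_int (sign \<sigma>) * pc23 a b c d e"
proof -
  have w: "\<forall>k<5. gword ([na,nb,nc,nd,ne] ! k) ([a,b,c,d,e] ! k)"
    using assms(2-6) by (auto dest!: less_5_cases)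
  have s: "(\<Sum>k<5. [na,nb,nc,nd,ne] ! k) = M" using assms(7) by (simp add: sum_lessThan_5)
  have e: "pc23_tup ((!) [a,b,c,d,e]) = pc23 a b c d e" by (simp add: pc23_tup_def)
  show ?thesis using F[unfolded pc23_deg_def, rule_format, OF w[rule_format] s \<sigma>] unfolding e .
qed

lemma pc222_deg_permute:
  assumes H: "pc222_deg M" and "gword na a" "gword nb b" "gword nc c" "gword nd d" "gword ne e" "gword ng g"
    "na + nb + nc + nd + ne + ng = M"
    and \<sigma>: "\<sigma> permutes {..<6}"
  shows "pc222_tup ((!) [a,b,c,d,e,g] \<circ> \<sigma>) = of_int (sign \<sigma>) * pc222 a b c d e g"
proof -
  have w: "\<forall>k<6. gword ([na,nb,nc,nd,ne,ng] ! k) ([a,b,c,d,e,g] ! k)"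
    using assms(2-7) by (auto dest!: less_6_cases)
  have s: "(\<Sum>k<6. [na,nb,nc,nd,ne,ng] ! k) = M" using assms(8) by (simp add: sum_lessThan_6)
  have e: "pc222_tup ((!) [a,b,c,d,e,g]) = pc222 a b c d e g" by (simp add: pc222_tup_def)
  show ?thesis using H[unfolded pc222_deg_def, rule_format, OF w[rule_format] s \<sigma>] unfolding e .
qed

lemma pc23_deg_transpose:
  assumes F: "pc23_deg M" and "gword na a" "gword nb b" "gword nc c" "gword nd d" "gword ne e"
      "na + nb + nc + nd + ne = M"
    and "i < 5" "j < 5" "i \<noteq> j"
  shows "pc23_tup ((!) [a,b,c,d,e] \<circ> transpose i j) = - pc23 a b c d e"
  using pc23_deg_permute[OF assms(1-7), of "transpose i j"] assms(8-10)
  by (simp add: permutes_swap_id sign_swap_id)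

lemma pc222_deg_transpose:
  assumes H: "pc222_deg M" and "gword na a" "gword nb b" "gword nc c" "gword nd d" "gword ne e" "gword ng g"
    "na + nb + nc + nd + ne + ng = M"
    and "i < 6" "j < 6" "i \<noteq> j"
  shows "pc222_tup ((!) [a,b,c,d,e,g] \<circ> transpose i j) = - pc222 a b c d e g"
  using pc222_deg_permute[OF assms(1-8), of "transpose i j"] assms(9-11)
  by (simp add: permutes_swap_id sign_swap_id)

lemma pc23_deg_below:
  assumes "\<forall>M<N. identities_deg M" "gword na a" "gword nb b" "gword nc c" "gword nd d" "gword ne e"
      "na + nb + nc + nd + ne < N"
  shows "pc23_deg (na + nb + nc + nd + ne)"
  using assms unfolding identities_deg_def by blast

lemma pc222_deg_below:
  assumes "\<forall>M<N. identities_deg M" "na + nb + nc + nd + ne + ng < N"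
  shows "pc222_deg (na + nb + nc + nd + ne + ng)"
  using assms unfolding identities_deg_def by blast

lemma pc23_transpose_below:
  assumes "\<forall>M<N. identities_deg M" "gword na a" "gword nb b" "gword nc c" "gword nd d" "gword ne e"
      "na + nb + nc + nd + ne < N"
    "i < 5" "j < 5" "i \<noteq> j"
  shows "pc23_tup ((!) [a,b,c,d,e] \<circ> transpose i j) = - pc23 a b c d e"
  by (rule pc23_deg_transpose[OF pc23_deg_below[OF assms(1-7)] assms(2-6) refl assms(8-10)])

lemma pc222_transpose_below:
  assumes "\<forall>M<N. identities_deg M" "gword na a" "gword nb b" "gword nc c" "gword nd d" "gword ne e" "gword ng g"
    "na + nb + nc + nd + ne + ng < N" "i < 6" "j < 6" "i \<noteq> j"
  shows "pc222_tup ((!) [a,b,c,d,e,g] \<circ> transpose i j) = - pc222 a b c d e g"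
  by (rule pc222_deg_transpose[OF pc222_deg_below[OF assms(1,8)] assms(2-7) refl assms(9-11)])

lemma pc23_permute_below:
  assumes "\<forall>M<N. identities_deg M" "gword na a" "gword nb b" "gword nc c" "gword nd d" "gword ne e"
      "na + nb + nc + nd + ne < N"
    "\<sigma> permutes {..<5}"
  shows "pc23_tup ((!) [a,b,c,d,e] \<circ> \<sigma>) = of_int (sign \<sigma>) * pc23 a b c d e"
  by (rule pc23_deg_permute[OF pc23_deg_below[OF assms(1-7)] assms(2-6) refl assms(8)])

lemma pc33_split2:
  assumes IH: "\<forall>M<N. identities_deg M" and x: "x \<in> X" and m: "gword n m"
    and w: "gword na a" "gword nb b" "gword nd d" "gword ne e" "gword ng g"
    and s: "na + nb + Suc n + nd + ne + ng = N"
  shows "pc33 a b (x*m) d e g = 0"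
proof -
  note pos = gword_pos[OF m] w[THEN gword_pos]
  have x1: "gword 1 x" by (rule gword_gen[OF x])
  have "pc33 a b m d e g = 0" by (rule pc33_below[OF IH w(1,2) m w(3-5)]) (use s in simp)
  moreover have "pc33 a b x d e g = 0" by (rule pc33_below[OF IH w(1,2) x1 w(3-5)]) (use s pos in simp)
  moreover have "comm4 d e g m = 0" by (rule comm4_below[OF IH w(3-5) m]) (use s pos in simp)
  ultimately show ?thesis by (simp add: pc33_mult2)
qed

lemma pc33_split5:
  assumes IH: "\<forall>M<N. identities_deg M" and x: "x \<in> X" and m: "gword n m"
    and w: "gword na a" "gword nb b" "gword nc c" "gword nd d" "gword ne e"
    and s: "na + nb + nc + nd + ne + Suc n = N"
  shows "pc33 a b c d e (x*m) = 0"
proof -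
  note pos = gword_pos[OF m] w[THEN gword_pos]
  have x1: "gword 1 x" by (rule gword_gen[OF x])
  have "pc33 a b c d e m = 0" by (rule pc33_below[OF IH w m]) (use s in simp)
  moreover have "pc33 a b c d e x = 0" by (rule pc33_below[OF IH w x1]) (use s pos in simp)
  moreover have "comm4 a b c x = 0" by (rule comm4_below[OF IH w(1-3) x1]) (use s pos in simp)
  ultimately show ?thesis by (simp add: pc33_mult5)
qed

lemma pc33_split0:
  assumes IH: "\<forall>M<N. identities_deg M" and x: "x \<in> X" and m: "gword n m"
    and w: "gword nb b" "gword nc c" "gword nd d" "gword ne e" "gword ng g"
    and s: "Suc n + nb + nc + nd + ne + ng = N"
  shows "pc33 (x*m) b c d e g = 0"
proof -
  note pos = gword_pos[OF m] w[THEN gword_pos]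
  have x1: "gword 1 x" by (rule gword_gen[OF x])
  have h1: "pc33 m b c d e g = 0" by (rule pc33_below[OF IH m w]) (use s in simp)
  have h2: "pc33 x b c d e g = 0" by (rule pc33_below[OF IH x1 w]) (use s pos in simp)
  have z1: "comm4 d e g m = 0" by (rule comm4_below[OF IH w(3-5) m]) (use s pos in simp)
  have z2: "comm4 x c m b = 0" by (rule comm4_below[OF IH x1 w(2) m w(1)]) (use s pos in simp)
  have z3: "comm4 x c b m = 0" by (rule comm4_below[OF IH x1 w(2) w(1) m]) (use s pos in simp)
  have f1: "pc23 d c x e g = - pc23 x c d e g"
    using pc23_transpose_below[OF IH x1 w(2-5), of 0 2] s pos by (simp add: pc23_tup_def transpose_def)
  have f2: "pc23 x b m e g = - pc23 m b x e g"
    using pc23_transpose_below[OF IH m w(1) x1 w(4,5), of 0 2] s pos by (simp add: pc23_tup_def transpose_def)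
  have f3: "pc23 m c d e g = - pc23 d c m e g"
    using pc23_transpose_below[OF IH w(3) w(2) m w(4,5), of 0 2] s pos by (simp add: pc23_tup_def transpose_def)
  have k1: "comm (comm m b) (comm d c) = 0"
    using comm4_below[OF IH m w(1) w(3) w(2)] comm4_below[OF IH m w(1) w(2) w(3)] s pos by (simp add: comm_comm)
  have k2: "comm (comm d c) (comm x b) = 0"
    using comm4_below[OF IH w(3) w(2) x1 w(1)] comm4_below[OF IH w(3) w(2) w(1) x1] s pos by (simp add: comm_comm)
  have r: "comm m b * pc23 x c d e g = - (comm x b * pc23 m c d e g)"
    by (rule comm_mult_pc23_antisym) (use f1 f2 f3 k1 k2 in simp_all)
  show ?thesis unfolding pc33_mult0 using h1 h2 z1 z2 z3 r by simp
qed

lemma pc33_split: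
  assumes IH: "\<forall>M<N. identities_deg M"
    and w: "gword na a" "gword nb b" "gword nc c" "gword nd d" "gword ne e" "gword ng g"
    and s: "na + nb + nc + nd + ne + ng = N" and l: "na \<ge> 2 \<or> nb \<ge> 2 \<or> nc \<ge> 2 \<or> ng \<ge> 2"
  shows "pc33 a b c d e g = 0"
  using l
proof (elim disjE)
  assume "na \<ge> 2"
  then obtain x m where "x \<in> X" "gword (na - 1) m" "a = x * m" using gword_split[OF w(1)] by blast
  then show ?thesis using pc33_split0[OF IH, of x "na - 1" m] w s \<open>na \<ge> 2\<close> by simp
next
  assume "nb \<ge> 2"
  then obtain x m where "x \<in> X" "gword (nb - 1) m" "b = x * m" using gword_split[OF w(2)] by blast
  then have "pc33 b a c d e g = 0" using pc33_split0[OF IH, of x "nb - 1" m] w s \<open>nb \<ge> 2\<close> by simp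
  then show ?thesis by (simp add: pc33_swap01[of a b])
next
  assume "nc \<ge> 2"
  then obtain x m where "x \<in> X" "gword (nc - 1) m" "c = x * m" using gword_split[OF w(3)] by blast
  then show ?thesis using pc33_split2[OF IH, of x "nc - 1" m] w s \<open>nc \<ge> 2\<close> by simp
next
  assume "ng \<ge> 2"
  then obtain x m where "x \<in> X" "gword (ng - 1) m" "g = x * m" using gword_split[OF w(6)] by blast
  then show ?thesis using pc33_split5[OF IH, of x "ng - 1" m] w s \<open>ng \<ge> 2\<close> by simp
qed

lemma pc33_deg_step:
  assumes IH: "\<forall>M<N. identities_deg M"
  shows "pc33_deg N"
  unfolding pc33_deg_def
proof (intro allI impI)
  fix a b c d e g na nb nc nd ne ng
  assume w: "gword na a" "gword nb b" "gword nc c" "gword nd d" "gword ne e" "gword ng g"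
    and s: "na + nb + nc + nd + ne + ng = N"
  note pos = w[THEN gword_pos]
  show "pc33 a b c d e g = 0"
  proof (cases "na \<ge> 2 \<or> nb \<ge> 2 \<or> nc \<ge> 2 \<or> ng \<ge> 2")
    case True
    then show ?thesis by (rule pc33_split[OF IH w s])
  next
    case F: False
    show ?thesis
    proof (cases "nd \<ge> 2 \<or> ne \<ge> 2")
      case True
      have "pc33 d e g a b c = 0"
        by (rule pc33_split[OF IH w(4-6) w(1-3)]) (use s True in auto)
      moreover have "comm4 a b c d = 0" "comm4 a b c e = 0" "comm4 a b c g = 0"
        using comm4_below[OF IH w(1-3) w(4)] comm4_below[OF IH w(1-3) w(5)] comm4_below[OF IH w(1-3) w(6)] s pos by auto
      ultimately show ?thesis by (simp add: pc33_commute[of a b c d e g])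
    next
      case False
      with F pos have "na = 1" "nb = 1" "nc = 1" "nd = 1" "ne = 1" "ng = 1" by auto
      then show ?thesis using w by (intro pc33_gens) (auto intro: gword_one)
    qed
  qed
qed

lemma pc222_mult0_below:
  assumes IH: "\<forall>M<N. identities_deg M" and x: "x \<in> X" and m: "gword n m"
    and w: "gword nb b" "gword nc c" "gword nd d" "gword ne e" "gword ng g"
    and s: "Suc n + nb + nc + nd + ne + ng = N"
  shows "pc222 (x*m) b c d e g = x * pc222 m b c d e g + pc222 x b c d e g * m
      - (pc223 x b c d e g m + pc223 x b c d e g m)"
proof -
  note pos = gword_pos[OF m] w[THEN gword_pos]
  have f: "pc23 e g c d m = pc23 c d e g m"
    using pc23_permute_below[OF IH w(2-5) m _ transpose_comp_transpose_permutes[of 0 "{..<5}" 2 1 3]] s pos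
    by (simp add: pc23_tup_def transpose_def sign_transpose_comp_transpose)
  have z: "comm4 c d m e = 0" "comm4 c d m g = 0"
    using comm4_below[OF IH w(2,3) m w(4)] comm4_below[OF IH w(2,3) m w(5)] s pos by auto
  show ?thesis unfolding pc222_mult0 f z by (simp add: pc223_def algebra_simps)
qed

lemma pc223_antisym13_below:
  assumes IH: "\<forall>M<N. identities_deg M" and x: "x \<in> X" and m: "gword n m"
    and w: "gword nb b" "gword nc c" "gword nd d" "gword ne e" "gword ng g"
    and s: "Suc n + nb + nc + nd + ne + ng = N"
  shows "pc223 x b c d e g m + pc223 x d c b e g m = 0"
proof -
  note pos = gword_pos[OF m] w[THEN gword_pos]
  have x1: "gword 1 x" by (rule gword_gen[OF x])
  show ?thesis
  proof (rule pc223_antisym13)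
    show "pc23 d c e g m = - pc23 e c d g m"
      using pc23_transpose_below[OF IH w(3,2,4,5) m, of 0 2] s pos by (simp add: pc23_tup_def transpose_def)
    show "pc23 b x d g m = - pc23 d x b g m"
      using pc23_transpose_below[OF IH w(1) x1 w(3,5) m, of 0 2] s pos by (simp add: pc23_tup_def transpose_def)
    show "pc23 e c b g m = - pc23 b c e g m"
      using pc23_transpose_below[OF IH w(4,2,1,5) m, of 0 2] s pos by (simp add: pc23_tup_def transpose_def)
    show "comm (comm b x) (comm e c) = 0"
      using comm4_below[OF IH w(1) x1 w(4,2)] comm4_below[OF IH w(1) x1 w(2,4)] s pos by (simp add: comm_comm)
    show "comm (comm e c) (comm d x) = 0"
      using comm4_below[OF IH w(4,2,3) x1] comm4_below[OF IH w(4,2) x1 w(3)] s pos by (simp add: comm_comm)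
  qed
qed

lemma pc223_antisym12_below:
  assumes IH: "\<forall>M<N. identities_deg M" and x: "x \<in> X" and m: "gword n m"
    and w: "gword na a" "gword nc c" "gword nd d" "gword ne e" "gword ng g"
    and s: "Suc n + na + nc + nd + ne + ng = N"
  shows "pc223 x a c d e g m + pc223 x c a d e g m = 0"
proof -
  note pos = gword_pos[OF m] w[THEN gword_pos]
  have x1: "gword 1 x" by (rule gword_gen[OF x])
  show ?thesis
  proof (rule pc223_antisym12)
    show "pc23 c d e g m = - pc23 e d c g m"
      using pc23_transpose_below[OF IH w(2,3,4,5) m, of 0 2] s pos by (simp add: pc23_tup_def transpose_def)
    show "pc23 a x c g m = - pc23 c x a g m"
      using pc23_transpose_below[OF IH w(1) x1 w(2,5) m, of 0 2] s pos by (simp add: pc23_tup_def transpose_def)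
    show "pc23 e d a g m = - pc23 a d e g m"
      using pc23_transpose_below[OF IH w(4,3,1,5) m, of 0 2] s pos by (simp add: pc23_tup_def transpose_def)
    show "comm (comm a x) (comm e d) = 0"
      using comm4_below[OF IH w(1) x1 w(4,3)] comm4_below[OF IH w(1) x1 w(3,4)] s pos by (simp add: comm_comm)
    show "comm (comm e d) (comm c x) = 0"
      using comm4_below[OF IH w(4,3,2) x1] comm4_below[OF IH w(4,3) x1 w(2)] s pos by (simp add: comm_comm)
  qed
qed

lemma pc222_swap13_split0:
  assumes IH: "\<forall>M<N. identities_deg M" and x: "x \<in> X" and m: "gword n m"
    and w: "gword nb b" "gword nc c" "gword nd d" "gword ne e" "gword ng g"
    and s: "Suc n + nb + nc + nd + ne + ng = N"
  shows "pc222 (x*m) b c d e g + pc222 (x*m) d c b e g = 0"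
proof -
  note pos = gword_pos[OF m] w[THEN gword_pos]
  have x1: "gword 1 x" by (rule gword_gen[OF x])
  have e1: "pc222 (x*m) b c d e g = x * pc222 m b c d e g + pc222 x b c d e g * m - (pc223 x b c d e g m + pc223 x b c d e g m)"
    by (rule pc222_mult0_below[OF IH x m w s])
  have e2: "pc222 (x*m) d c b e g = x * pc222 m d c b e g + pc222 x d c b e g * m - (pc223 x d c b e g m + pc223 x d c b e g m)"
    by (rule pc222_mult0_below[OF IH x m w(3,2,1,4,5)]) (use s in simp)
  have A: "pc222 m d c b e g = - pc222 m b c d e g"
    using pc222_transpose_below[OF IH m w, of 1 3] s pos by (simp add: pc222_tup_def transpose_def)
  have B: "pc222 x d c b e g = - pc222 x b c d e g"
    using pc222_transpose_below[OF IH x1 w, of 1 3] s pos by (simp add: pc222_tup_def transpose_def)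
  have K: "pc223 x d c b e g m = - pc223 x b c d e g m"
    using pc223_antisym13_below[OF IH x m w s] by (simp add: eq_neg_iff_add_eq_0 add.commute)
  show ?thesis unfolding e1 e2 A B K by (simp add: algebra_simps)
qed

lemma pc222_swap13_split1:
  assumes IH: "\<forall>M<N. identities_deg M" and x: "x \<in> X" and m: "gword n m"
    and w: "gword na a" "gword nc c" "gword nd d" "gword ne e" "gword ng g"
    and s: "na + Suc n + nc + nd + ne + ng = N"
  shows "pc222 a (x*m) c d e g + pc222 a d c (x*m) e g = 0"
proof -
  note pos = gword_pos[OF m] w[THEN gword_pos]
  have x1: "gword 1 x" by (rule gword_gen[OF x])
  have xm: "gword (Suc n) (x*m)" by (rule gword_Cons[OF x m])
  have z: "comm (comm a d) (comm c (x*m)) = 0"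
    using comm4_below[OF IH w(1,3,2) xm] comm4_below[OF IH w(1,3) xm w(2)] s pos by (simp add: comm_comm)
  have swap: "pc222 a d c (x*m) e g = - pc222 (x*m) c a d e g + comm (comm a d) (comm c (x*m)) * comm e g"
    by (simp add: pc222_def comm_def algebra_simps)
  have e1: "pc222 (x*m) a c d e g = x * pc222 m a c d e g + pc222 x a c d e g * m - (pc223 x a c d e g m + pc223 x a c d e g m)"
    by (rule pc222_mult0_below[OF IH x m w]) (use s in simp)
  have e2: "pc222 (x*m) c a d e g = x * pc222 m c a d e g + pc222 x c a d e g * m - (pc223 x c a d e g m + pc223 x c a d e g m)"
    by (rule pc222_mult0_below[OF IH x m w(2,1,3,4,5)]) (use s in simp)
  have A: "pc222 m c a d e g = - pc222 m a c d e g"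
    using pc222_transpose_below[OF IH m w, of 1 2] s pos by (simp add: pc222_tup_def transpose_def)
  have B: "pc222 x c a d e g = - pc222 x a c d e g"
    using pc222_transpose_below[OF IH x1 w, of 1 2] s pos by (simp add: pc222_tup_def transpose_def)
  have K: "pc223 x c a d e g m = - pc223 x a c d e g m"
    using pc223_antisym12_below[OF IH x m w] s by (simp add: eq_neg_iff_add_eq_0 add.commute)
  show ?thesis unfolding pc222_swap01[of a "x*m"] swap z e1 e2 A B K
    by (simp add: algebra_simps)
qed

lemma pc222_swap13_split2:
  assumes IH: "\<forall>M<N. identities_deg M" and x: "x \<in> X" and m: "gword n m"
    and w: "gword na a" "gword nb b" "gword nd d" "gword ne e" "gword ng g"
    and s: "na + nb + Suc n + nd + ne + ng = N"
  shows "pc222 a b (x*m) d e g + pc222 a d (x*m) b e g = 0"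
proof -
  note pos = gword_pos[OF m] w[THEN gword_pos]
  have x1: "gword 1 x" by (rule gword_gen[OF x])
  have xm: "gword (Suc n) (x*m)" by (rule gword_Cons[OF x m])
  have z1: "comm (comm a b) (comm (x*m) d) = 0"
    using comm4_below[OF IH w(1,2) xm w(3)] comm4_below[OF IH w(1,2,3) xm] s pos by (simp add: comm_comm)
  have z2: "comm (comm a d) (comm (x*m) b) = 0"
    using comm4_below[OF IH w(1,3) xm w(2)] comm4_below[OF IH w(1,3,2) xm] s pos by (simp add: comm_comm)
  have e1: "pc222 (x*m) d a b e g = x * pc222 m d a b e g + pc222 x d a b e g * m - (pc223 x d a b e g m + pc223 x d a b e g m)"
    by (rule pc222_mult0_below[OF IH x m w(3,1,2,4,5)]) (use s in simp)
  have e2: "pc222 (x*m) b a d e g = x * pc222 m b a d e g + pc222 x b a d e g * m - (pc223 x b a d e g m + pc223 x b a d e g m)"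
    by (rule pc222_mult0_below[OF IH x m w(2,1,3,4,5)]) (use s in simp)
  have A: "pc222 m b a d e g = - pc222 m d a b e g"
    using pc222_transpose_below[OF IH m w(3,1,2,4,5), of 1 3] s pos by (simp add: pc222_tup_def transpose_def)
  have B: "pc222 x b a d e g = - pc222 x d a b e g"
    using pc222_transpose_below[OF IH x1 w(3,1,2,4,5), of 1 3] s pos by (simp add: pc222_tup_def transpose_def)
  have K: "pc223 x b a d e g m = - pc223 x d a b e g m"
    using pc223_antisym13_below[OF IH x m w(3,1,2,4,5)] s by (simp add: eq_neg_iff_add_eq_0 add.commute)
  show ?thesis unfolding pc222_commute12[of a b "x*m" d e g] pc222_commute12[of a d "x*m" b e g] z1 z2 e1 e2 A B K
    by (simp add: algebra_simps)
qed

lemma pc222_swap13_split4: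
  assumes IH: "\<forall>M<N. identities_deg M" and x: "x \<in> X" and m: "gword n m"
    and w: "gword na a" "gword nb b" "gword nc c" "gword nd d" "gword ng g"
    and s: "na + nb + nc + nd + Suc n + ng = N"
  shows "pc222 a b c d (x*m) g + pc222 a d c b (x*m) g = 0"
proof -
  note pos = gword_pos[OF m] w[THEN gword_pos]
  have x1: "gword 1 x" by (rule gword_gen[OF x])
  have xm: "gword (Suc n) (x*m)" by (rule gword_Cons[OF x m])
  have z1: "comm (comm c d) (comm (x*m) g) = 0"
    using comm4_below[OF IH w(3,4) xm w(5)] comm4_below[OF IH w(3,4,5) xm] s pos by (simp add: comm_comm)
  have z2: "comm (comm a b) (comm (x*m) g) = 0"
    using comm4_below[OF IH w(1,2) xm w(5)] comm4_below[OF IH w(1,2,5) xm] s pos by (simp add: comm_comm)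
  have z3: "comm (comm c b) (comm (x*m) g) = 0"
    using comm4_below[OF IH w(3,2) xm w(5)] comm4_below[OF IH w(3,2,5) xm] s pos by (simp add: comm_comm)
  have z4: "comm (comm a d) (comm (x*m) g) = 0"
    using comm4_below[OF IH w(1,4) xm w(5)] comm4_below[OF IH w(1,4,5) xm] s pos by (simp add: comm_comm)
  have e1: "pc222 (x*m) g a b c d = x * pc222 m g a b c d + pc222 x g a b c d * m - (pc223 x g a b c d m + pc223 x g a b c d m)"
    by (rule pc222_mult0_below[OF IH x m w(5,1,2,3,4)]) (use s in simp)
  have e2: "pc222 (x*m) g a d c b = x * pc222 m g a d c b + pc222 x g a d c b * m - (pc223 x g a d c b m + pc223 x g a d c b m)"
    by (rule pc222_mult0_below[OF IH x m w(5,1,4,3,2)]) (use s in simp)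
  have A: "pc222 m g a d c b = - pc222 m g a b c d"
    using pc222_transpose_below[OF IH m w(5,1,2,3,4), of 3 5] s pos by (simp add: pc222_tup_def transpose_def)
  have B: "pc222 x g a d c b = - pc222 x g a b c d"
    using pc222_transpose_below[OF IH x1 w(5,1,2,3,4), of 3 5] s pos by (simp add: pc222_tup_def transpose_def)
  have F: "pc23 a d c b m = - pc23 a b c d m"
    using pc23_transpose_below[OF IH w(1,2,3,4) m, of 1 3] s pos by (simp add: pc23_tup_def transpose_def)
  have K: "pc223 x g a d c b m = - pc223 x g a b c d m"
    unfolding pc223_def F by simp
  show ?thesis unfolding pc222_rotate[of a b c d "x*m" g] pc222_rotate[of a d c b "x*m" g] z1 z2 z3 z4 e1 e2 A B K
    by (simp add: algebra_simps)
qed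

lemma pc222_swap13_split:
  assumes IH: "\<forall>M<N. identities_deg M"
    and w: "gword na a" "gword nb b" "gword nc c" "gword nd d" "gword ne e" "gword ng g"
    and s: "na + nb + nc + nd + ne + ng = N" and l: "na \<ge> 2 \<or> nb \<ge> 2 \<or> nc \<ge> 2 \<or> ne \<ge> 2"
  shows "pc222 a b c d e g + pc222 a d c b e g = 0"
  using l
proof (elim disjE)
  assume "na \<ge> 2"
  then obtain x m where "x \<in> X" "gword (na - 1) m" "a = x * m" using gword_split[OF w(1)] by blast
  then show ?thesis using pc222_swap13_split0[OF IH, of x "na - 1" m] w s \<open>na \<ge> 2\<close> by simp
next
  assume "nb \<ge> 2"
  then obtain x m where "x \<in> X" "gword (nb - 1) m" "b = x * m" using gword_split[OF w(2)] by blast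
  then show ?thesis using pc222_swap13_split1[OF IH, of x "nb - 1" m] w s \<open>nb \<ge> 2\<close> by simp
next
  assume "nc \<ge> 2"
  then obtain x m where "x \<in> X" "gword (nc - 1) m" "c = x * m" using gword_split[OF w(3)] by blast
  then show ?thesis using pc222_swap13_split2[OF IH, of x "nc - 1" m] w s \<open>nc \<ge> 2\<close> by simp
next
  assume "ne \<ge> 2"
  then obtain x m where "x \<in> X" "gword (ne - 1) m" "e = x * m" using gword_split[OF w(5)] by blast
  then show ?thesis using pc222_swap13_split4[OF IH, of x "ne - 1" m] w s \<open>ne \<ge> 2\<close> by simp
qed

lemma pc222_swap13_deg:
  assumes IH: "\<forall>M<N. identities_deg M"
    and w: "gword na a" "gword nb b" "gword nc c" "gword nd d" "gword ne e" "gword ng g"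
    and s: "na + nb + nc + nd + ne + ng = N"
  shows "pc222 a b c d e g + pc222 a d c b e g = 0"
proof -
  note core = pc222_swap13_split[OF IH]
  note pos = w[THEN gword_pos]
  consider "na \<ge> 2 \<or> nb \<ge> 2 \<or> nc \<ge> 2 \<or> ne \<ge> 2" | "nd \<ge> 2" | "ng \<ge> 2"
    | "na = 1" "nb = 1" "nc = 1" "nd = 1" "ne = 1" "ng = 1" using pos by linarith
  then show ?thesis
  proof cases
    case 1 then show ?thesis by (rule core[OF w s])
  next
    case 2
    have "pc222 a d c b e g + pc222 a b c d e g = 0" by (rule core[OF w(1,4,3,2,5,6)]) (use s 2 in auto)
    then show ?thesis by (simp add: add.commute)
  next
    case 3
    have "pc222 a b c d g e + pc222 a d c b g e = 0" by (rule core[OF w(1-4,6,5)]) (use s 3 in auto)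
    moreover have h: "pc222 a b c d e g = - pc222 a b c d g e" "pc222 a d c b e g = - pc222 a d c b g e"
      by (rule pc222_swap45)+
    ultimately show ?thesis unfolding h minus_add_distrib[symmetric] by simp
  next
    case 4
    have X: "a \<in> X" "b \<in> X" "c \<in> X" "d \<in> X" "e \<in> X" "g \<in> X" using w 4 by (auto intro: gword_one)
    have "\<forall>k<6. [a,b,c,d,e,g] ! k \<in> X" using X by (auto dest!: less_6_cases)
    from pc222_gens_permute[OF this permutes_swap_id[of 1 "{..<6}" 3]]
    show ?thesis by (simp add: pc222_tup_def transpose_def sign_swap_id)
  qed
qed

definition deg_tuple6 :: "nat \<Rightarrow> (nat \<Rightarrow> 'a) \<Rightarrow> bool" where
  "deg_tuple6 N y \<longleftrightarrow> (\<exists>dy. (\<forall>k<6. gword (dy k) (y k)) \<and> (\<Sum>k<6. dy k) = N)"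

lemma deg_tuple6_permute:
  assumes \<rho>: "\<rho> permutes {..<6}" and g: "deg_tuple6 N y"
  shows "deg_tuple6 N (y \<circ> \<rho>)"
proof -
  obtain dy where w: "\<forall>k<6. gword (dy k) (y k)" and s: "(\<Sum>k<6. dy k) = N" using g unfolding deg_tuple6_def by blast
  have "\<forall>k<6. gword ((dy \<circ> \<rho>) k) ((y \<circ> \<rho>) k)"
    using w permutes_in_image[OF \<rho>] by auto
  moreover have "(\<Sum>k<6. (dy \<circ> \<rho>) k) = N" using s sum.permute[OF \<rho>, of dy] by simp
  ultimately show ?thesis unfolding deg_tuple6_def by blast
qed

lemma deg_tuple6_permute_iff:
  assumes \<rho>: "\<rho> permutes {..<6}"
  shows "deg_tuple6 N (y \<circ> \<rho>) \<longleftrightarrow> deg_tuple6 N y"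
proof
  assume "deg_tuple6 N (y \<circ> \<rho>)"
  from deg_tuple6_permute[OF permutes_inv[OF \<rho>] this] show "deg_tuple6 N y"
    by (simp add: comp_assoc permutes_inv_o[OF \<rho>])
qed (rule deg_tuple6_permute[OF \<rho>])

text \<open>\<open>perm_sign_mod\<close> quantifies over all tuples, while the induction hypothesis only
  speaks about tuples of words of total degree \<open>N\<close>; this set of tuples is closed under
  permutations, so restricting \<open>pc222_tup\<close> to it (and \<open>0\<close> elsewhere) lets the generator
  argument for \<open>S\<^sub>6\<close> apply.\<close>

definition pc222_deg_restr :: "nat \<Rightarrow> (nat \<Rightarrow> 'a) \<Rightarrow> 'a" where
  "pc222_deg_restr N y = (if deg_tuple6 N y then pc222_tup y else 0)"

lemma perm_sign_mod_pc222_deg_restr: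
  assumes \<rho>: "\<rho> permutes {..<6}" and h: "\<And>y. deg_tuple6 N y \<Longrightarrow> pc222_tup (y \<circ> \<rho>) = of_int s * pc222_tup y"
  shows "perm_sign_mod {0} (pc222_deg_restr N) s \<rho>"
  unfolding perm_sign_mod_def pc222_deg_restr_def using h deg_tuple6_permute_iff[OF \<rho>] by auto

lemma deg_tuple6E:
  assumes "deg_tuple6 N y"
  obtains dy :: "nat \<Rightarrow> nat" where "gword (dy 0) (y 0)" "gword (dy 1) (y 1)" "gword (dy 2) (y 2)"
    "gword (dy 3) (y 3)" "gword (dy 4) (y 4)" "gword (dy 5) (y 5)" "dy 0 + dy 1 + dy 2 + dy 3 + dy 4 + dy 5 = N"
proof -
  obtain dy where "\<forall>k<6. gword (dy k) (y k)" "(\<Sum>k<6. dy k) = N"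
    using assms unfolding deg_tuple6_def by blast
  then show ?thesis by (intro that[of dy]) (auto simp: sum_lessThan_6)
qed

lemma pc222_deg_restr_swap13:
  assumes IH: "\<forall>M<N. identities_deg M"
  shows "perm_sign_mod {0} (pc222_deg_restr N) (-1) (transpose 1 3)"
proof (rule perm_sign_mod_pc222_deg_restr[OF permutes_swap_id])
  fix y assume "deg_tuple6 N y"
  then obtain dy :: "nat \<Rightarrow> nat" where w: "gword (dy 0) (y 0)" "gword (dy 1) (y 1)" "gword (dy 2) (y 2)"
    "gword (dy 3) (y 3)" "gword (dy 4) (y 4)" "gword (dy 5) (y 5)"
    and s: "dy 0 + dy 1 + dy 2 + dy 3 + dy 4 + dy 5 = N" by (rule deg_tuple6E)
  have "pc222 (y 0) (y 1) (y 2) (y 3) (y 4) (y 5) + pc222 (y 0) (y 3) (y 2) (y 1) (y 4) (y 5) = 0"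
    by (rule pc222_swap13_deg[OF IH w s])
  then show "pc222_tup (y \<circ> transpose 1 3) = of_int (- 1) * pc222_tup y"
    by (simp add: pc222_tup_def transpose_def eq_neg_iff_add_eq_0 add.commute)
qed simp_all

lemma pc222_deg_restr_swap_pairs:
  assumes IH: "\<forall>M<N. identities_deg M"
  shows "perm_sign_mod {0} (pc222_deg_restr N) 1 (transpose 2 4 \<circ> transpose 3 5)"
proof (rule perm_sign_mod_pc222_deg_restr[OF transpose_comp_transpose_permutes])
  fix y assume "deg_tuple6 N y"
  then obtain dy :: "nat \<Rightarrow> nat" where w: "gword (dy 0) (y 0)" "gword (dy 1) (y 1)" "gword (dy 2) (y 2)"
    "gword (dy 3) (y 3)" "gword (dy 4) (y 4)" "gword (dy 5) (y 5)"
    and s: "dy 0 + dy 1 + dy 2 + dy 3 + dy 4 + dy 5 = N" by (rule deg_tuple6E)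
  note pos = w[THEN gword_pos]
  have "comm (comm (y 2) (y 3)) (comm (y 4) (y 5)) = 0"
    using comm4_below[OF IH w(3,4,5,6)] comm4_below[OF IH w(3,4,6,5)] s pos
    by (simp add: comm_comm)
  then show "pc222_tup (y \<circ> (transpose 2 4 \<circ> transpose 3 5)) = of_int 1 * pc222_tup y"
    using pc222_commute23[of "y 0" "y 1" "y 2" "y 3" "y 4" "y 5"] by (simp add: pc222_tup_def transpose_def)
qed simp_all

lemma pc222_deg_step:
  assumes IH: "\<forall>M<N. identities_deg M"
  shows "pc222_deg N"
  unfolding pc222_deg_def
proof (intro allI impI)
  fix y :: "nat \<Rightarrow> 'a" and dy :: "nat \<Rightarrow> nat" and \<sigma> :: "nat \<Rightarrow> nat"
  assume w: "\<forall>k<6. gword (dy k) (y k)" and s: "(\<Sum>k<6. dy k) = N" and \<sigma>: "\<sigma> permutes {..<6}"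
  have "perm_sign_mod {0} (pc222_deg_restr N) (sign \<sigma>) \<sigma>"
  proof (rule perm_sign_mod_S6[OF add_subgroup_zero _ _ _
        pc222_deg_restr_swap13[OF IH] pc222_deg_restr_swap_pairs[OF IH] \<sigma>])
    show "perm_sign_mod {0} (pc222_deg_restr N) (-1) (transpose 0 1)"
      by (rule perm_sign_mod_pc222_deg_restr[OF permutes_swap_id]) (simp_all add: pc222_tup_transpose01[simplified])
    show "perm_sign_mod {0} (pc222_deg_restr N) (-1) (transpose 2 3)"
      by (rule perm_sign_mod_pc222_deg_restr[OF permutes_swap_id]) (simp_all add: pc222_tup_transpose23[simplified])
    show "perm_sign_mod {0} (pc222_deg_restr N) (-1) (transpose 4 5)"
      by (rule perm_sign_mod_pc222_deg_restr[OF permutes_swap_id]) (simp_all add: pc222_tup_transpose45[simplified])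
  qed
  moreover have "deg_tuple6 N y" "deg_tuple6 N (y \<circ> \<sigma>)"
    using w s deg_tuple6_permute[OF \<sigma>] unfolding deg_tuple6_def by blast+
  ultimately show "pc222_tup (y \<circ> \<sigma>) = of_int (sign \<sigma>) * pc222_tup y"
    unfolding perm_sign_mod_zero_iff pc222_deg_restr_def by (metis (mono_tags))
qed

lemma pc23_split0:
  assumes IH: "\<forall>M<N. identities_deg M" and x: "x \<in> X" and m: "gword n m"
    and w: "gword nb b" "gword nc c" "gword nd d" "gword ne e" and s: "Suc n + nb + nc + nd + ne = N"
  shows "pc23 (x*m) b c d e = x * pc23 m b c d e + pc23 x b c d e * m"
proof -
  have "comm4 c d e m = 0" using comm4_below[OF IH w(2-4) m] s gword_pos[OF w(1)] by simp
  then show ?thesis by (simp add: pc23_mult0)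
qed

lemma pc23_split1:
  assumes IH: "\<forall>M<N. identities_deg M" and x: "x \<in> X" and m: "gword n m"
    and w: "gword na a" "gword nc c" "gword nd d" "gword ne e" and s: "na + Suc n + nc + nd + ne = N"
  shows "pc23 a (x*m) c d e = x * pc23 a m c d e + pc23 a x c d e * m"
proof -
  have "pc23 (x*m) a c d e = x * pc23 m a c d e + pc23 x a c d e * m"
    by (rule pc23_split0[OF IH x m w]) (use s in simp)
  then show ?thesis by (simp add: pc23_swap01[of a "x*m"] pc23_swap01[of a m] pc23_swap01[of a x])
qed

lemma pc23_split2:
  assumes IH: "\<forall>M<N. identities_deg M" and H3: "pc33_deg N" and H: "pc222_deg N" and x: "x \<in> X" and m: "gword n m"
    and w: "gword na a" "gword nb b" "gword nd d" "gword ne e" and s: "na + nb + Suc n + nd + ne = N"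
  shows "pc23 a b (x*m) d e = x * pc23 a b m d e + pc23 a b x d e * m"
proof -
  have x1: "gword 1 x" by (rule gword_gen[OF x])
  have h3: "pc33 a b x m d e = 0" using H3 w x1 m s unfolding pc33_deg_def by fastforce
  have "pc222 a b x d m e = - pc222 a b x e m d"
    using pc222_deg_transpose[OF H w(1,2) x1 w(4) m w(3), of 3 5] s by (simp add: pc222_tup_def transpose_def)
  then show ?thesis using h3 by (simp add: pc23_mult2)
qed

lemma pc23_split3:
  assumes IH: "\<forall>M<N. identities_deg M" and H3: "pc33_deg N" and H: "pc222_deg N" and x: "x \<in> X" and m: "gword n m"
    and w: "gword na a" "gword nb b" "gword nc c" "gword ne e" and s: "na + nb + nc + Suc n + ne = N"
  shows "pc23 a b c (x*m) e = x * pc23 a b c m e + pc23 a b c x e * m"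
proof -
  have "pc23 a b (x*m) c e = x * pc23 a b m c e + pc23 a b x c e * m"
    by (rule pc23_split2[OF IH H3 H x m w]) (use s in simp)
  then show ?thesis by (simp add: pc23_swap23[of a b c "x*m"] pc23_swap23[of a b c m] pc23_swap23[of a b c x])
qed

lemma pc23_split4:
  assumes IH: "\<forall>M<N. identities_deg M" and H3: "pc33_deg N" and x: "x \<in> X" and m: "gword n m"
    and w: "gword na a" "gword nb b" "gword nc c" "gword nd d" and s: "na + nb + nc + nd + Suc n = N"
  shows "pc23 a b c d (x*m) = x * pc23 a b c d m + pc23 a b c d x * m"
proof -
  have x1: "gword 1 x" by (rule gword_gen[OF x])
  have h3: "pc33 a b x c d m = 0" using H3 w x1 m s unfolding pc33_deg_def by fastforce
  then show ?thesis by (simp add: pc23_mult4)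
qed

lemma pc23_tup_split:
  assumes IH: "\<forall>M<N. identities_deg M" and H3: "pc33_deg N" and H: "pc222_deg N"
    and w: "\<forall>k<5. gword (dy k) (y k)" and s: "(\<Sum>k<5. dy k) = N"
    and j: "j < 5" and yj: "y j = x * m" and x: "x \<in> X" and m: "gword n m" and dj: "dy j = Suc n"
  shows "pc23_tup y = x * pc23_tup (y(j := m)) + pc23_tup (y(j := x)) * m"
proof -
  have w0: "gword (dy 0) (y 0)" and w1: "gword (dy 1) (y 1)" and w2: "gword (dy 2) (y 2)"
    and w3: "gword (dy 3) (y 3)" and w4: "gword (dy 4) (y 4)" using w by auto
  have s': "dy 0 + dy 1 + dy 2 + dy 3 + dy 4 = N" using s by (simp add: sum_lessThan_5)
  from less_5_cases[OF j] show ?thesis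
  proof (elim disjE)
    assume "j = 0" then show ?thesis
      using pc23_split0[OF IH x m w1 w2 w3 w4] yj dj s' by (simp add: pc23_tup_def)
  next
    assume "j = 1" then show ?thesis
      using pc23_split1[OF IH x m w0 w2 w3 w4] yj dj s' by (simp add: pc23_tup_def)
  next
    assume "j = 2" then show ?thesis
      using pc23_split2[OF IH H3 H x m w0 w1 w3 w4] yj dj s' by (simp add: pc23_tup_def)
  next
    assume "j = 3" then show ?thesis
      using pc23_split3[OF IH H3 H x m w0 w1 w2 w4] yj dj s' by (simp add: pc23_tup_def)
  next
    assume "j = 4" then show ?thesis
      using pc23_split4[OF IH H3 x m w0 w1 w2 w3] yj dj s' by (simp add: pc23_tup_def)
  qed
qed

lemma pc23_permute_split:
  assumes IH: "\<forall>M<N. identities_deg M" and H3: "pc33_deg N" and H: "pc222_deg N"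
    and w: "\<forall>k<5. gword (dy k) (y k)" and s: "(\<Sum>k<5. dy k) = N" and \<sigma>: "\<sigma> permutes {..<5}"
    and j: "j < 5" "dy j \<ge> 2"
  shows "pc23_tup (y \<circ> \<sigma>) = of_int (sign \<sigma>) * pc23_tup y"
proof -
  obtain x m where x: "x \<in> X" and m: "gword (dy j - 1) m" and yj: "y j = x * m"
    using gword_split w j by blast
  define n where "n = dy j - 1"
  have dj: "dy j = Suc n" using j unfolding n_def by simp
  have m': "gword n m" using m unfolding n_def .
  have pos: "n \<ge> 1" using gword_pos[OF m'] .
  have x1: "gword 1 x" by (rule gword_gen[OF x])
  have wm: "\<forall>k<5. gword ((dy(j := n)) k) ((y(j := m)) k)" using w m' by auto
  have wx: "\<forall>k<5. gword ((dy(j := 1)) k) ((y(j := x)) k)" using w x1 by auto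
  have sm: "(\<Sum>k<5. (dy(j := n)) k) < N" using sum_lessThan_5_upd[OF j(1), of dy n] s dj by simp
  have sx: "(\<Sum>k<5. (dy(j := 1)) k) < N" using sum_lessThan_5_upd[OF j(1), of dy 1] s dj pos by simp
  have Fm: "pc23_deg (\<Sum>k<5. (dy(j := n)) k)" using IH sm unfolding identities_deg_def by blast
  have Fx: "pc23_deg (\<Sum>k<5. (dy(j := 1)) k)" using IH sx unfolding identities_deg_def by blast
  have em: "pc23_tup (y(j := m) \<circ> \<sigma>) = of_int (sign \<sigma>) * pc23_tup (y(j := m))"
    using Fm wm \<sigma> unfolding pc23_deg_def by blast
  have ex: "pc23_tup (y(j := x) \<circ> \<sigma>) = of_int (sign \<sigma>) * pc23_tup (y(j := x))"
    using Fx wx \<sigma> unfolding pc23_deg_def by blast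
  have e1: "pc23_tup y = x * pc23_tup (y(j := m)) + pc23_tup (y(j := x)) * m"
    by (rule pc23_tup_split[OF IH H3 H w s j(1) yj x m' dj])
  define j' where "j' = inv \<sigma> j"
  have j': "j' < 5" using permutes_in_image[OF permutes_inv[OF \<sigma>]] j(1) unfolding j'_def by auto
  have sj: "\<sigma> j' = j" unfolding j'_def using permutes_inverses(1)[OF \<sigma>] by simp
  have upd: "(y \<circ> \<sigma>)(j' := v) = y(j := v) \<circ> \<sigma>" for v
    unfolding j'_def by (rule fun_upd_comp_permutes[OF \<sigma>])
  have w\<sigma>: "\<forall>k<5. gword ((dy \<circ> \<sigma>) k) ((y \<circ> \<sigma>) k)" using w permutes_in_image[OF \<sigma>] by auto
  have s\<sigma>: "(\<Sum>k<5. (dy \<circ> \<sigma>) k) = N" using s sum.permute[OF \<sigma>, of dy] by simp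
  have e2: "pc23_tup (y \<circ> \<sigma>) = x * pc23_tup ((y \<circ> \<sigma>)(j' := m)) + pc23_tup ((y \<circ> \<sigma>)(j' := x)) * m"
    by (rule pc23_tup_split[OF IH H3 H w\<sigma> s\<sigma> j']) (use yj sj x m' dj in auto)
  have c: "x * (of_int (sign \<sigma>) * A) = of_int (sign \<sigma>) * (x * A)" for A
  proof -
    have "x * of_int (sign \<sigma>) = of_int (sign \<sigma>) * x" by (simp add: mult_of_int_commute)
    then show ?thesis by (metis mult.assoc)
  qed
  show ?thesis unfolding e2 e1 upd em ex c
    by (simp add: distrib_left mult.assoc)
qed

lemma pc23_deg_step:
  assumes IH: "\<forall>M<N. identities_deg M" and H3: "pc33_deg N" and H: "pc222_deg N"
  shows "pc23_deg N"
  unfolding pc23_deg_def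
proof (intro allI impI)
  fix y :: "nat \<Rightarrow> 'a" and dy :: "nat \<Rightarrow> nat" and \<sigma> :: "nat \<Rightarrow> nat"
  assume w: "\<forall>k<5. gword (dy k) (y k)" and s: "(\<Sum>k<5. dy k) = N" and \<sigma>: "\<sigma> permutes {..<5}"
  show "pc23_tup (y \<circ> \<sigma>) = of_int (sign \<sigma>) * pc23_tup y"
  proof (cases "\<exists>j<5. dy j \<ge> 2")
    case True
    then show ?thesis using pc23_permute_split[OF IH H3 H w s \<sigma>] by blast
  next
    case False
    have "y k \<in> X" if "k < 5" for k
    proof -
      have "gword (dy k) (y k)" "\<not> dy k \<ge> 2" using w False that by auto
      then show ?thesis using gword_pos gword_one by (metis One_nat_def Suc_1 le_antisym not_less_eq_eq)
    qed
    then show ?thesis by (intro pc23_gens_permute[OF _ \<sigma>]) blast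
  qed
qed

lemma comm4_split0:
  assumes IH: "\<forall>M<N. identities_deg M" and F: "pc23_deg N" and x: "x \<in> X" and m: "gword n m"
    and wb: "gword nb b" "gword nc c" "gword nd d" and s: "Suc n + nb + nc + nd = N"
  shows "comm4 (x*m) b c d = 0"
proof -
  have x1: "gword 1 x" by (rule gword_gen[OF x])
  note pos = gword_pos[OF m] wb[THEN gword_pos]
  have z: "comm4 m b c d = 0" "comm4 x b c d = 0"
    "comm4 x c d m = 0" "comm4 x c d b = 0" "comm4 x b c m = 0" "comm4 x b c d = 0" "comm4 x b d m = 0" "comm4 x b d c = 0"
    using comm4_below[OF IH m wb] comm4_below[OF IH x1 wb] comm4_below[OF IH x1 wb(2,3) m] comm4_below[OF IH x1 wb(2,3,1)]
      comm4_below[OF IH x1 wb(1,2) m] comm4_below[OF IH x1 wb(1,2,3)] comm4_below[OF IH x1 wb(1,3) m] comm4_below[OF IH x1 wb(1,3,2)]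
      s pos by simp_all
  have f1: "pc23_tup ((!) [x,d,m,b,c] \<circ> transpose 1 4) = - pc23 x d m b c"
    by (rule pc23_deg_transpose[OF F x1 wb(3) m wb(1,2)]) (use s in simp_all)
  have f2: "pc23_tup ((!) [x,b,m,c,d] \<circ> transpose 0 2) = - pc23 x b m c d"
    by (rule pc23_deg_transpose[OF F x1 wb(1) m wb(2,3)]) (use s in simp_all)
  have f3: "pc23_tup ((!) [m,d,x,b,c] \<circ> transpose 1 4) = - pc23 m d x b c"
    by (rule pc23_deg_transpose[OF F m wb(3) x1 wb(1,2)]) (use s in simp_all)
  have "pc23 x c m b d = - pc23 x d m b c" "pc23 m b x c d = - pc23 x b m c d" "pc23 m c x b d = - pc23 m d x b c"
    using f1 f2 f3 by (simp_all add: pc23_tup_def transpose_def)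
  then show ?thesis unfolding comm4_mult0 z by simp
qed

lemma comm4_split2:
  assumes IH: "\<forall>M<N. identities_deg M" and F: "pc23_deg N" and x: "x \<in> X" and m: "gword n m"
    and w: "gword na a" "gword nb b" "gword nd d" and s: "na + nb + Suc n + nd = N"
  shows "comm4 a b (x*m) d = 0"
proof -
  have x1: "gword 1 x" by (rule gword_gen[OF x])
  note pos = gword_pos[OF m] w[THEN gword_pos]
  have z: "comm4 a b m d = 0" "comm4 a b x d = 0" "comm4 a b x m = 0"
    using comm4_below[OF IH w(1,2) m w(3)] comm4_below[OF IH w(1,2) x1 w(3)] comm4_below[OF IH w(1,2) x1 m]
      s pos by simp_all
  have "pc23_tup ((!) [x,d,a,b,m] \<circ> transpose 0 4) = - pc23 x d a b m"
    by (rule pc23_deg_transpose[OF F x1 w(3,1,2) m]) (use s in simp_all)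
  then have "pc23 m d a b x = - pc23 x d a b m" by (simp add: pc23_tup_def transpose_def)
  then show ?thesis unfolding comm4_mult2 z by simp
qed

lemma comm4_split3:
  assumes IH: "\<forall>M<N. identities_deg M" and x: "x \<in> X" and m: "gword n m"
    and w: "gword na a" "gword nb b" "gword nc c" and s: "na + nb + nc + Suc n = N"
  shows "comm4 a b c (x*m) = 0"
proof -
  have x1: "gword 1 x" by (rule gword_gen[OF x])
  note pos = gword_pos[OF m] w[THEN gword_pos]
  have "comm4 a b c m = 0" "comm4 a b c x = 0"
    using comm4_below[OF IH w m] comm4_below[OF IH w x1] s pos by simp_all
  then show ?thesis unfolding comm4_mult3 by simp
qed

lemma comm4_deg_step:
  assumes IH: "\<forall>M<N. identities_deg M" and F: "pc23_deg N"
  shows "comm4_deg N"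
  unfolding comm4_deg_def
proof (intro allI impI)
  fix a b c d na nb nc nd
  assume w: "gword na a" "gword nb b" "gword nc c" "gword nd d" and s: "na + nb + nc + nd = N"
  note pos = w[THEN gword_pos]
  consider "na \<ge> 2" | "nb \<ge> 2" | "nc \<ge> 2" | "nd \<ge> 2" | "na = 1" "nb = 1" "nc = 1" "nd = 1"
    using pos by linarith
  then show "comm4 a b c d = 0"
  proof cases
    case 1
    then obtain x m where "x \<in> X" "gword (na - 1) m" "a = x * m" using gword_split[OF w(1)] by blast
    then show ?thesis using comm4_split0[OF IH F, of x "na - 1" m] w s 1 by simp
  next
    case 2
    then obtain x m where "x \<in> X" "gword (nb - 1) m" "b = x * m" using gword_split[OF w(2)] by blast
    then have "comm4 b a c d = 0" using comm4_split0[OF IH F, of x "nb - 1" m] w s 2 by simp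
    then show ?thesis by (simp add: comm4_swap01[of a b c d])
  next
    case 3
    then obtain x m where "x \<in> X" "gword (nc - 1) m" "c = x * m" using gword_split[OF w(3)] by blast
    then show ?thesis using comm4_split2[OF IH F, of x "nc - 1" m] w s 3 by simp
  next
    case 4
    then obtain x m where "x \<in> X" "gword (nd - 1) m" "d = x * m" using gword_split[OF w(4)] by blast
    then show ?thesis using comm4_split3[OF IH, of x "nd - 1" m] w s 4 by simp
  next
    case 5
    then show ?thesis using w by (intro comm4_gens) (auto intro: gword_one)
  qed
qed

lemma identities_deg_all: "identities_deg N"
proof (induction N rule: less_induct)
  case (less N)
  then have IH: "\<forall>M<N. identities_deg M" by blast
  have H3: "pc33_deg N" by (rule pc33_deg_step[OF IH])
  have H: "pc222_deg N" by (rule pc222_deg_step[OF IH])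
  have F: "pc23_deg N" by (rule pc23_deg_step[OF IH H3 H])
  have Z: "comm4_deg N" by (rule comm4_deg_step[OF IH F])
  show ?case unfolding identities_deg_def using H3 H F Z by blast
qed

lemma comm4_gwords: "gword na a \<Longrightarrow> gword nb b \<Longrightarrow> gword nc c \<Longrightarrow> gword nd d \<Longrightarrow> comm4 a b c d = 0"
  using identities_deg_all[of "na + nb + nc + nd"] unfolding identities_deg_def comm4_deg_def by blast

end

definition word_mono :: "nat list \<Rightarrow> fring" where
  "word_mono l = Poly_Mapping.single (Word l) 1"

lemma word_mono_Nil: "word_mono [] = 1"
  by (simp add: word_mono_def zero_word_def[symmetric])

lemma word_mono_Cons: "word_mono (i # l) = var i * word_mono l"
  by (simp add: word_mono_def var_def mult_single)

lemma fring_induct [case_names zero word_mono diff]: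
  assumes "P 0" and "\<And>l. P (word_mono l)" and "\<And>p q. P p \<Longrightarrow> P q \<Longrightarrow> P (p - q)"
  shows "P (r::fring)"
proof (rule frag_induction[of r UNIV P])
  show "P (frag_of w)" for w
    using assms(2)[of "case w of Word l \<Rightarrow> l"] by (cases w) (simp add: word_mono_def)
qed (use assms in auto)

definition const_coeff :: "fring \<Rightarrow> int" where
  "const_coeff a = Poly_Mapping.lookup a (Word [])"

lemma const_coeff_diff: "const_coeff (a - b) = const_coeff a - const_coeff b"
  by (simp add: const_coeff_def lookup_minus)

lemma const_coeff_word_mono: "const_coeff (word_mono l) = (if l = [] then 1 else 0)"
  by (simp add: const_coeff_def word_mono_def lookup_single)

lemma const_coeff_mult: "const_coeff (a * b) = const_coeff a * const_coeff b"
proof (induction a rule: fring_induct)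
  case (word_mono l)
  show ?case
  proof (induction b rule: fring_induct)
    case (word_mono l')
    have "word_mono l * word_mono l' = word_mono (l @ l')"
      by (simp add: word_mono_def mult_single)
    then show ?case by (simp add: const_coeff_word_mono)
  qed (simp_all add: const_coeff_def right_diff_distrib lookup_minus)
qed (simp_all add: const_coeff_def left_diff_distrib lookup_minus)

lemma const_coeff_comm: "const_coeff (comm a b) = 0"
  by (simp add: comm_def const_coeff_diff const_coeff_mult)

lemma const_coeff_T4: "a \<in> T4 \<Longrightarrow> const_coeff a = 0"
  unfolding T4_def
proof (induction rule: ideal_gen.induct)
  case (base a)
  then show ?case by (auto simp: const_coeff_comm)
qed (simp_all add: const_coeff_def lookup_add const_coeff_mult[unfolded const_coeff_def])

lemma one_notin_T4: "1 \<notin> T4"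
  using const_coeff_T4 const_coeff_word_mono[of "[]"] by (auto simp: word_mono_Nil)

definition two_sided_ideal :: "'a::ring_1 set \<Rightarrow> bool" where
  "two_sided_ideal I \<longleftrightarrow> 0 \<in> I \<and> (\<forall>a\<in>I. \<forall>b\<in>I. a + b \<in> I) \<and> (\<forall>a\<in>I. \<forall>r. r * a \<in> I \<and> a * r \<in> I)"

definition ideal_rel :: "'a::ring_1 set \<Rightarrow> 'a \<Rightarrow> 'a \<Rightarrow> bool" where
  "ideal_rel I a b \<longleftrightarrow> a - b \<in> I"

lemma left_ideal_gen_uminus: "a \<in> left_ideal_gen S \<Longrightarrow> - a \<in> left_ideal_gen S"
  using left_ideal_gen.lmult[of a S "- 1"] by simp

lemma left_ideal_gen_diff:
  "a \<in> left_ideal_gen S \<Longrightarrow> b \<in> left_ideal_gen S \<Longrightarrow> a - b \<in> left_ideal_gen S"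
  unfolding diff_conv_add_uminus by (intro left_ideal_gen.add left_ideal_gen_uminus)

lemma add_subgroup_left_ideal_gen: "add_subgroup (left_ideal_gen S)"
  unfolding add_subgroup_def using left_ideal_gen.zero left_ideal_gen.add left_ideal_gen_uminus by blast

lemma two_sided_ideal_ideal_gen: "two_sided_ideal (ideal_gen S)"
  unfolding two_sided_ideal_def using ideal_gen.zero ideal_gen.add ideal_gen.lmult ideal_gen.rmult by blast

lemma two_sided_ideal_left_ideal_gen:
  assumes "\<And>a r. a \<in> left_ideal_gen S \<Longrightarrow> a * r \<in> left_ideal_gen S"
  shows "two_sided_ideal (left_ideal_gen S)"
  unfolding two_sided_ideal_def using left_ideal_gen.zero left_ideal_gen.add left_ideal_gen.lmult assms by blast

lemma two_sided_ideal_uminus: "two_sided_ideal I \<Longrightarrow> a \<in> I \<Longrightarrow> - a \<in> I"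
  unfolding two_sided_ideal_def by (metis mult_minus1)

lemma two_sided_ideal_add: "two_sided_ideal I \<Longrightarrow> a \<in> I \<Longrightarrow> b \<in> I \<Longrightarrow> a + b \<in> I"
  unfolding two_sided_ideal_def by blast

lemma two_sided_ideal_diff: "two_sided_ideal I \<Longrightarrow> a \<in> I \<Longrightarrow> b \<in> I \<Longrightarrow> a - b \<in> I"
  unfolding diff_conv_add_uminus by (intro two_sided_ideal_add two_sided_ideal_uminus)

lemma two_sided_ideal_lmult: "two_sided_ideal I \<Longrightarrow> a \<in> I \<Longrightarrow> r * a \<in> I"
  unfolding two_sided_ideal_def by blast

lemma two_sided_ideal_rmult: "two_sided_ideal I \<Longrightarrow> a \<in> I \<Longrightarrow> a * r \<in> I"
  unfolding two_sided_ideal_def by blast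

lemma equivp_ideal_rel: "two_sided_ideal I \<Longrightarrow> equivp (ideal_rel I)"
proof (rule equivpI)
  assume I: "two_sided_ideal I"
  show "reflp (ideal_rel I)"
    using I unfolding two_sided_ideal_def ideal_rel_def reflp_def by simp
  show "symp (ideal_rel I)"
    using two_sided_ideal_uminus[OF I] unfolding ideal_rel_def symp_def by (metis minus_diff_eq)
  show "transp (ideal_rel I)"
  proof (rule transpI)
    fix a b c assume "ideal_rel I a b" "ideal_rel I b c"
    then have "(a - b) + (b - c) \<in> I"
      unfolding ideal_rel_def by (rule two_sided_ideal_add[OF I])
    then show "ideal_rel I a c" unfolding ideal_rel_def by simp
  qed
qed

lemma ideal_rel_plus: "two_sided_ideal I \<Longrightarrow> ideal_rel I a b \<Longrightarrow> ideal_rel I c d \<Longrightarrow> ideal_rel I (a + c) (b + d)"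
  unfolding ideal_rel_def using two_sided_ideal_add[of I "a - b" "c - d"] by (simp add: algebra_simps)

lemma ideal_rel_uminus: "two_sided_ideal I \<Longrightarrow> ideal_rel I a b \<Longrightarrow> ideal_rel I (- a) (- b)"
  unfolding ideal_rel_def using two_sided_ideal_uminus[of I "a - b"] by (simp add: algebra_simps)

lemma ideal_rel_minus: "two_sided_ideal I \<Longrightarrow> ideal_rel I a b \<Longrightarrow> ideal_rel I c d \<Longrightarrow> ideal_rel I (a - c) (b - d)"
  unfolding ideal_rel_def using two_sided_ideal_diff[of I "a - b" "c - d"] by (simp add: algebra_simps)

lemma ideal_rel_times: "two_sided_ideal I \<Longrightarrow> ideal_rel I a b \<Longrightarrow> ideal_rel I c d \<Longrightarrow> ideal_rel I (a * c) (b * d)"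
proof -
  assume I: "two_sided_ideal I" and h: "ideal_rel I a b" "ideal_rel I c d"
  have "a * c - b * d = (a - b) * c + b * (c - d)" by (simp add: algebra_simps)
  with h show ?thesis
    using two_sided_ideal_add[OF I two_sided_ideal_rmult[OF I] two_sided_ideal_lmult[OF I]]
    unfolding ideal_rel_def by metis
qed

lemma ideal_rel_zero_one: "1 \<notin> I \<Longrightarrow> two_sided_ideal I \<Longrightarrow> \<not> ideal_rel I 0 1"
  unfolding ideal_rel_def using two_sided_ideal_uminus[of I "0 - 1"] by auto

lemma of_int_hom:
  fixes h :: "'a::ring_1 \<Rightarrow> 'b::ring_1"
  assumes "h 1 = 1" "\<And>a b. h (a - b) = h a - h b"
  shows "h (of_int k) = of_int k"
proof -
  have h0: "h 0 = 0" using assms(2)[of 0 0] by simp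
  have hneg: "h (- a) = - h a" for a using assms(2)[of 0 a] h0 by simp
  have hn: "h (of_nat n) = of_nat n" for n
  proof (induction n)
    case (Suc n)
    have "h (of_nat (Suc n)) = h (of_nat n - (- 1))" by (simp add: add.commute)
    also have "\<dots> = h (of_nat n) - h (- 1)" by (rule assms(2))
    also have "\<dots> = of_nat (Suc n)" using Suc assms(1) hneg by simp
    finally show ?case .
  qed (simp add: h0)
  show ?thesis
    by (cases k rule: int_cases) (simp_all add: hn hneg del: of_nat_Suc)
qed

abbreviation Lg :: "fring set" where
  "Lg \<equiv> left_ideal_gen gens"

definition pc23_var :: "(nat \<Rightarrow> nat) \<Rightarrow> fring" where
  "pc23_var i = pc23 (var (i 0)) (var (i 1)) (var (i 2)) (var (i 3)) (var (i 4))"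
definition pc222_var :: "(nat \<Rightarrow> nat) \<Rightarrow> fring" where
  "pc222_var i = pc222 (var (i 0)) (var (i 1)) (var (i 2)) (var (i 3)) (var (i 4)) (var (i 5))"

lemma lcomm_snoc: "xs \<noteq> [] \<Longrightarrow> lcomm (xs @ [y]) = comm (lcomm xs) (y::'a::ring)"
  by (cases xs) auto

lemma lcomm_var_in_gens: "length ns \<ge> 4 \<Longrightarrow> lcomm (map var ns) \<in> gens"
  unfolding gens_def by (intro UnI1 CollectI exI[of _ ns]) simp

lemma pc33_var_in_gens: "pc33 (var a) (var b) (var c) (var d) (var e) (var g) \<in> gens"
proof -
  let ?i = "(!) [a, b, c, d, e, g]"
  have "pc33 (var a) (var b) (var c) (var d) (var e) (var g)
    = lcomm [var (?i 0), var (?i 1), var (?i 2)] * lcomm [var (?i 3), var (?i 4), var (?i 5)]"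
    by (simp add: pc33_def)
  then show ?thesis
    unfolding gens_def by (intro UnI1 UnI2 CollectI exI[of _ ?i]) simp
qed

lemma pc23_var_alt_in_gens:
  "\<sigma> permutes {..<5} \<Longrightarrow> pc23_var i - of_int (sign \<sigma>) * pc23_var (i \<circ> \<sigma>) \<in> gens"
  unfolding gens_def pc23_var_def pc23_def by (intro UnI1 UnI2 CollectI exI[of _ i] exI[of _ \<sigma>]) simp

lemma pc222_var_alt_in_gens:
  "\<sigma> permutes {..<6} \<Longrightarrow> pc222_var i - of_int (sign \<sigma>) * pc222_var (i \<circ> \<sigma>) \<in> gens"
  unfolding gens_def pc222_var_def pc222_def by (intro UnI2 CollectI exI[of _ i] exI[of _ \<sigma>]) simp

lemma gens_cases [consumes 1, case_names lcomm pc33 pc23 pc222]: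
  assumes "g \<in> gens"
  obtains (lcomm) ns :: "nat list" where "g = lcomm (map var ns)" "length ns \<ge> 4"
    | (pc33) i :: "nat \<Rightarrow> nat" where "g = pc33 (var (i 0)) (var (i 1)) (var (i 2)) (var (i 3)) (var (i 4)) (var (i 5))"
    | (pc23) i \<sigma> :: "nat \<Rightarrow> nat" where "g = pc23_var i - of_int (sign \<sigma>) * pc23_var (i \<circ> \<sigma>)" "\<sigma> permutes {..<5}"
    | (pc222) i \<sigma> :: "nat \<Rightarrow> nat" where "g = pc222_var i - of_int (sign \<sigma>) * pc222_var (i \<circ> \<sigma>)" "\<sigma> permutes {..<6}"
  using assms unfolding gens_def pc23_var_def pc222_var_def pc23_def pc33_def pc222_def
  by (auto simp del: lcomm.simps) auto

section \<open>The quotient by \<open>T4\<close>: generators lie in \<open>T4\<close>\<close>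

lemma two_sided_ideal_T4: "two_sided_ideal T4"
  unfolding T4_def by (rule two_sided_ideal_ideal_gen)

lemma lcomm4_in_T4: "lcomm [a, b, c, d] \<in> T4"
  unfolding T4_def by (rule ideal_gen.base) blast

quotient_type qT = fring / "ideal_rel T4"
  by (rule equivp_ideal_rel[OF two_sided_ideal_T4])

instantiation qT :: ring_1
begin
lift_definition zero_qT :: qT is 0 .
lift_definition one_qT :: qT is 1 .
lift_definition plus_qT :: "qT \<Rightarrow> qT \<Rightarrow> qT" is "(+)" by (rule ideal_rel_plus[OF two_sided_ideal_T4])
lift_definition uminus_qT :: "qT \<Rightarrow> qT" is uminus by (rule ideal_rel_uminus[OF two_sided_ideal_T4])
lift_definition minus_qT :: "qT \<Rightarrow> qT \<Rightarrow> qT" is "(-)" by (rule ideal_rel_minus[OF two_sided_ideal_T4])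
lift_definition times_qT :: "qT \<Rightarrow> qT \<Rightarrow> qT" is "(*)" by (rule ideal_rel_times[OF two_sided_ideal_T4])
instance
proof
  fix a b c :: qT
  have eq: "ideal_rel T4 x y" if "x = y" for x y
    using that two_sided_ideal_T4 by (simp add: ideal_rel_def two_sided_ideal_def)
  show "a * b * c = a * (b * c)" by transfer (rule eq, simp add: mult.assoc)
  show "1 * a = a" by transfer (rule eq, simp)
  show "a * 1 = a" by transfer (rule eq, simp)
  show "a + b + c = a + (b + c)" by transfer (rule eq, simp add: add.assoc)
  show "a + b = b + a" by transfer (rule eq, simp add: add.commute)
  show "0 + a = a" by transfer (rule eq, simp)
  show "- a + a = 0" by transfer (rule eq, simp)
  show "a - b = a + - b" by transfer (rule eq, simp)
  show "(a + b) * c = a * c + b * c" by transfer (rule eq, simp add: distrib_right)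
  show "a * (b + c) = a * b + a * c" by transfer (rule eq, simp add: distrib_left)
  show "(0::qT) \<noteq> 1" by transfer (rule ideal_rel_zero_one[OF one_notin_T4 two_sided_ideal_T4])
qed
end

instance qT :: lie_nilpotent3
  by standard (transfer, use lcomm4_in_T4 in \<open>simp add: ideal_rel_def comm_def\<close>)

lemma abs_qT_mult: "abs_qT (a * b) = abs_qT a * abs_qT b"
  by (simp add: times_qT.abs_eq)
lemma abs_qT_minus: "abs_qT (a - b) = abs_qT a - abs_qT b"
  by (simp add: minus_qT.abs_eq)
lemma abs_qT_comm: "abs_qT (comm a b) = comm (abs_qT a) (abs_qT b)"
  by (simp add: comm_def abs_qT_mult abs_qT_minus)
lemma abs_qT_of_int: "abs_qT (of_int k) = of_int k"
  by (rule of_int_hom) (simp_all add: one_qT_def abs_qT_minus)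
lemma abs_qT_eq_0_iff: "abs_qT a = 0 \<longleftrightarrow> a \<in> T4"
  using qT.abs_eq_iff[of a 0] by (simp add: zero_qT_def ideal_rel_def)

lemma lcomm_var_in_T4: "length ns \<ge> 4 \<Longrightarrow> lcomm (map var ns) \<in> T4"
proof -
  assume "length ns \<ge> 4"
  then obtain a b c d rest where ns: "ns = a # b # c # d # rest"
    by (auto simp: Suc_le_length_iff numeral_eq_Suc)
  have "foldl comm x rest' \<in> T4" if "x \<in> T4" for x rest'
    using that
  proof (induction rest' arbitrary: x)
    case (Cons y rest')
    then show ?case
      using two_sided_ideal_diff[OF two_sided_ideal_T4 two_sided_ideal_rmult two_sided_ideal_lmult]
        two_sided_ideal_T4 by (simp add: comm_def)
  qed simp
  from this[OF lcomm4_in_T4] show ?thesis by (simp add: ns)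
qed

lemma gens_subset_T4: "gens \<subseteq> T4"
proof
  fix g assume "g \<in> gens"
  let ?v = "\<lambda>k. abs_qT (var k)"
  from \<open>g \<in> gens\<close> show "g \<in> T4"
  proof (cases rule: gens_cases)
    case lcomm
    then show ?thesis by (simp add: lcomm_var_in_T4)
  next
    case (pc33 i)
    then have "abs_qT g = pc33 (?v (i 0)) (?v (i 1)) (?v (i 2)) (?v (i 3)) (?v (i 4)) (?v (i 5))"
      by (simp add: pc33_def abs_qT_mult abs_qT_comm)
    then show ?thesis by (simp add: pc33_eq_0 flip: abs_qT_eq_0_iff)
  next
    case (pc23 i \<sigma>)
    have "abs_qT (pc23_var k) = pc23_tup (?v \<circ> k)" for k
      by (simp add: pc23_var_def pc23_tup_def pc23_def abs_qT_mult abs_qT_comm)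
    then have "abs_qT g = pc23_tup (?v \<circ> i) - of_int (sign \<sigma>) * pc23_tup (?v \<circ> i \<circ> \<sigma>)"
      by (simp add: pc23 abs_qT_minus abs_qT_mult abs_qT_of_int comp_assoc)
    also have "\<dots> = 0"
      by (simp add: pc23_tup_permute[OF pc23(2)] mult.assoc[symmetric] flip: of_int_mult)
    finally show ?thesis by (simp flip: abs_qT_eq_0_iff)
  next
    case (pc222 i \<sigma>)
    have "abs_qT (pc222_var k) = pc222_tup (?v \<circ> k)" for k
      by (simp add: pc222_var_def pc222_tup_def pc222_def abs_qT_mult abs_qT_comm)
    then have "abs_qT g = pc222_tup (?v \<circ> i) - of_int (sign \<sigma>) * pc222_tup (?v \<circ> i \<circ> \<sigma>)"
      by (simp add: pc222 abs_qT_minus abs_qT_mult abs_qT_of_int comp_assoc)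
    also have "\<dots> = 0"
      by (simp add: pc222_tup_permute[OF pc222(2)] mult.assoc[symmetric] flip: of_int_mult)
    finally show ?thesis by (simp flip: abs_qT_eq_0_iff)
  qed
qed

lemma Lg_subset_T4: "Lg \<subseteq> T4"
proof
  fix a assume "a \<in> Lg"
  then show "a \<in> T4"
    by induction
      (use gens_subset_T4 two_sided_ideal_T4 in
        \<open>auto simp: two_sided_ideal_def\<close>)
qed

section \<open>The left ideal generated by \<open>gens\<close> is two-sided\<close>

lemma lcomm_var_mult_in_Lg:
  assumes "length ns \<ge> 4"
  shows "lcomm (map var ns) * r \<in> Lg"
proof -
  have "lcomm (map var ns) * word_mono l \<in> Lg" if "length ns \<ge> 4" for ns l
    using that
  proof (induction l arbitrary: ns)
    case Nil
    then show ?case by (simp add: word_mono_Nil left_ideal_gen.base lcomm_var_in_gens)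
  next
    case (Cons j l)
    have "ns \<noteq> []"
      using Cons.prems by (cases ns) auto
    then have c: "lcomm (map var ns) * var j = var j * lcomm (map var ns) + lcomm (map var (ns @ [j]))"
      using lcomm_snoc[of "map var ns" "var j"] by (simp add: comm_def)
    have "lcomm (map var ns) * word_mono (j # l)
       = var j * (lcomm (map var ns) * word_mono l) + lcomm (map var (ns @ [j])) * word_mono l"
      unfolding word_mono_Cons mult.assoc[symmetric] c by (simp add: distrib_right mult.assoc)
    then show ?case
      using left_ideal_gen.add[OF left_ideal_gen.lmult[OF Cons.IH[OF Cons.prems]] Cons.IH[of "ns @ [j]"]]
        Cons.prems by simp
  qed
  with assms show ?thesis
    by (induction r rule: fring_induct)
      (simp_all add: left_ideal_gen.zero left_ideal_gen_diff right_diff_distrib)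
qed

lemma comm4_var_in_Lg: "comm4 (var a) (var b) (var c) (var d) \<in> Lg"
  using left_ideal_gen.base[OF lcomm_var_in_gens[of "[a, b, c, d]"]] by simp
lemma comm5_var_in_Lg: "comm (comm4 (var a) (var b) (var c) (var d)) (var e) \<in> Lg"
  using left_ideal_gen.base[OF lcomm_var_in_gens[of "[a, b, c, d, e]"]] by simp
lemma comm4_var_mult_in_Lg: "comm4 (var a) (var b) (var c) (var d) * r \<in> Lg"
  using lcomm_var_mult_in_Lg[of "[a, b, c, d]"] by simp
lemma comm5_var_mult_in_Lg: "comm (comm4 (var a) (var b) (var c) (var d)) (var e) * r \<in> Lg"
  using lcomm_var_mult_in_Lg[of "[a, b, c, d, e]"] by simp

lemma pc23_var_alt_in_Lg: "\<sigma> permutes {..<5} \<Longrightarrow> pc23_var i - of_int (sign \<sigma>) * pc23_var (i \<circ> \<sigma>) \<in> Lg"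
  by (rule left_ideal_gen.base[OF pc23_var_alt_in_gens])

lemma pc23_var_transpose_in_Lg:
  "a < 5 \<Longrightarrow> b < 5 \<Longrightarrow> a \<noteq> b \<Longrightarrow> pc23_var k + pc23_var (k \<circ> transpose a b) \<in> Lg"
  using pc23_var_alt_in_Lg[of "transpose a b" k] by (simp add: permutes_swap_id sign_swap_id)

lemma pc23_var_swap_pairs_in_Lg: "pc23_var k - pc23_var (k \<circ> (transpose 0 2 \<circ> transpose 1 3)) \<in> Lg"
  using pc23_var_alt_in_Lg[of "transpose 0 2 \<circ> transpose 1 3" k]
  by (simp add: transpose_comp_transpose_permutes sign_transpose_comp_transpose)

text \<open>Modulo \<open>Lg\<close>, \<open>[pc222_var i, x\<^sub>j]\<close> is three times \<open>pc223_var j i\<close>, which is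
  alternating in the six indices of \<open>i\<close>.\<close>

definition pc223_var :: "nat \<Rightarrow> (nat \<Rightarrow> nat) \<Rightarrow> fring" where
  "pc223_var j i = pc223 (var (i 0)) (var (i 1)) (var (i 2)) (var (i 3)) (var (i 4)) (var (i 5)) (var j)"

lemma pc223_var_eq: "pc223_var j i = comm (var (i 0)) (var (i 1)) * pc23_var ((!) [i 2, i 3, i 4, i 5, j])"
  by (simp add: pc223_var_def pc223_def pc23_var_def)

lemma pc223_var_transpose_in_Lg:
  assumes ab: "a' < 5" "b' < 5" "a' \<noteq> b'"
    and e: "\<And>i. pc223_var j (i \<circ> transpose a b)
      = comm (var (i 0)) (var (i 1)) * pc23_var ((!) [i 2, i 3, i 4, i 5, j] \<circ> transpose a' b')"
  shows "perm_sign_mod Lg (pc223_var j) (-1) (transpose a b)"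
  unfolding perm_sign_mod_def
proof
  fix i :: "nat \<Rightarrow> nat"
  have "pc223_var j (i \<circ> transpose a b) - of_int (- 1) * pc223_var j i
     = comm (var (i 0)) (var (i 1)) * (pc23_var ((!) [i 2, i 3, i 4, i 5, j])
        + pc23_var ((!) [i 2, i 3, i 4, i 5, j] \<circ> transpose a' b'))"
    unfolding e pc223_var_eq[of j i] by (simp add: distrib_left add.commute)
  then show "pc223_var j (i \<circ> transpose a b) - of_int (- 1) * pc223_var j i \<in> Lg"
    using left_ideal_gen.lmult[OF pc23_var_transpose_in_Lg[OF ab]] by simp
qed

lemma pc223_var_swap_pairs: "perm_sign_mod Lg (pc223_var j) 1 (transpose 0 2 \<circ> transpose 1 3)"
  unfolding perm_sign_mod_def
proof
  fix i :: "nat \<Rightarrow> nat"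
  have "pc223_var j (i \<circ> (transpose 0 2 \<circ> transpose 1 3)) - of_int 1 * pc223_var j i
    = comm4 (var (i 2)) (var (i 3)) (var (i 0)) (var (i 1)) * comm3 (var (i 4)) (var (i 5)) (var j)
      - comm4 (var (i 2)) (var (i 3)) (var (i 1)) (var (i 0)) * comm3 (var (i 4)) (var (i 5)) (var j)"
    by (simp add: pc223_var_def pc223_def pc23_def transpose_def comm_def algebra_simps)
  then show "pc223_var j (i \<circ> (transpose 0 2 \<circ> transpose 1 3)) - of_int 1 * pc223_var j i \<in> Lg"
    by (simp add: left_ideal_gen_diff comm4_var_mult_in_Lg)
qed

lemma pc223_var_permute:
  assumes \<sigma>: "\<sigma> permutes {..<6}"
  shows "perm_sign_mod Lg (pc223_var j) (sign \<sigma>) \<sigma>"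
proof -
  note S = add_subgroup_left_ideal_gen
  have m: "(-1::int) \<in> {1,-1}" "(1::int) \<in> {1,-1}" by auto
  have t01: "perm_sign_mod Lg (pc223_var j) (-1) (transpose 0 1)"
    by (simp add: perm_sign_mod_def pc223_var_def pc223_def pc23_def transpose_def comm_def
        algebra_simps left_ideal_gen.zero)
  have t23: "perm_sign_mod Lg (pc223_var j) (-1) (transpose 2 3)"
    and t45: "perm_sign_mod Lg (pc223_var j) (-1) (transpose 4 5)"
    and t24: "perm_sign_mod Lg (pc223_var j) (-1) (transpose 2 4)"
    and t35: "perm_sign_mod Lg (pc223_var j) (-1) (transpose 3 5)"
    by (rule pc223_var_transpose_in_Lg[of 0 1] pc223_var_transpose_in_Lg[of 2 3]
        pc223_var_transpose_in_Lg[of 0 2] pc223_var_transpose_in_Lg[of 1 3];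
        simp add: pc223_var_def pc223_def pc23_var_def transpose_def mult.assoc)+
  have t15: "perm_sign_mod Lg (pc223_var j) (-1) (transpose 1 5)"
    by (rule perm_sign_mod_conj[OF S m(2) pc223_var_swap_pairs t35]) (auto simp: fun_eq_iff transpose_def)
  have t13: "perm_sign_mod Lg (pc223_var j) (-1) (transpose 1 3)"
    by (rule perm_sign_mod_conj[OF S m(1) t35 t15]) (auto simp: fun_eq_iff transpose_def)
  have "perm_sign_mod Lg (pc223_var j) ((-1) * (-1)) (transpose 2 4 \<circ> transpose 3 5)"
    by (rule perm_sign_mod_comp[OF S m(1) m(1) t24 t35])
  then show ?thesis
    by (intro perm_sign_mod_S6[OF S t01 t23 t45 t13 _ \<sigma>]) simp
qed

lemma comm_pc222_var:
  "comm (pc222_var i) (var j) - (pc223_var j i + pc223_var j i + pc223_var j i) \<in> Lg"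
proof -
  define v where "v = (\<lambda>k. var (i k))"
  define x where "x = var j"
  define k1 where "k1 = (!) [i 4, i 5, i 2, i 3, j]"
  define k3 where "k3 = (!) [i 4, i 5, i 0, i 1, j]"
  let ?s = "transpose 0 2 \<circ> transpose (1::nat) 3"
  have e: "comm (pc222_var i) (var j) - (pc223_var j i + pc223_var j i + pc223_var j i)
    = comm (v 0) (v 1) * (comm (comm4 (v 2) (v 3) x (v 4)) (v 5) - comm (comm4 (v 2) (v 3) x (v 5)) (v 4))
      + comm (v 0) (v 1) * (pc23_var k1 - pc23_var (k1 \<circ> ?s))
      + (comm (comm4 (v 0) (v 1) x (v 2)) (v 3) * comm (v 4) (v 5)
         - comm (comm4 (v 0) (v 1) x (v 3)) (v 2) * comm (v 4) (v 5))
      + comm (v 2) (v 3) * (comm (comm4 (v 0) (v 1) x (v 4)) (v 5) - comm (comm4 (v 0) (v 1) x (v 5)) (v 4))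
      + comm (v 2) (v 3) * (pc23_var k3 - pc23_var (k3 \<circ> ?s))
      + (pc223_var j (i \<circ> ?s) - of_int 1 * pc223_var j i)"
    by (simp add: pc222_var_def pc223_var_def pc23_var_def pc222_def pc223_def pc23_def
        v_def x_def k1_def k3_def transpose_def comm_def algebra_simps)
  have r: "pc223_var j (i \<circ> ?s) - of_int 1 * pc223_var j i \<in> Lg"
    using pc223_var_swap_pairs unfolding perm_sign_mod_def by blast
  show ?thesis
    unfolding e x_def v_def
    by (intro left_ideal_gen.add left_ideal_gen.lmult left_ideal_gen_diff
        comm5_var_in_Lg comm5_var_mult_in_Lg pc23_var_swap_pairs_in_Lg r)
qed

lemma comm_pc23_var: "comm (pc23_var i) (var j) \<in> Lg"
proof -
  have "comm (pc23_var i) (var j)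
     = comm (var (i 0)) (var (i 1)) * comm4 (var (i 2)) (var (i 3)) (var (i 4)) (var j)
       + pc33 (var (i 0)) (var (i 1)) (var j) (var (i 2)) (var (i 3)) (var (i 4))"
    unfolding pc23_var_def pc23_def pc33_def comm_mult_left ..
  then show ?thesis
    by (simp add: left_ideal_gen.add left_ideal_gen.lmult left_ideal_gen.base
        comm4_var_in_Lg pc33_var_in_gens)
qed

lemma comm_gens_var_in_Lg:
  assumes "g \<in> gens"
  shows "comm g (var j) \<in> Lg"
  using assms
proof (cases rule: gens_cases)
  case (lcomm ns)
  then have "ns \<noteq> []" by (cases ns) auto
  with lcomm have "comm g (var j) = lcomm (map var (ns @ [j]))"
    using lcomm_snoc[of "map var ns" "var j"] by simp
  then show ?thesis
    using left_ideal_gen.base[OF lcomm_var_in_gens[of "ns @ [j]"]] lcomm by simp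
next
  case (pc33 i)
  show ?thesis
    unfolding pc33 pc33_def comm_mult_left
    by (intro left_ideal_gen.add left_ideal_gen.lmult comm4_var_in_Lg comm4_var_mult_in_Lg)
next
  case (pc23 i \<sigma>)
  have "comm g (var j) = comm (pc23_var i) (var j) - of_int (sign \<sigma>) * comm (pc23_var (i \<circ> \<sigma>)) (var j)"
    unfolding pc23(1) by (simp add: comm_def algebra_simps mult_of_int_commute)
  then show ?thesis
    by (simp add: left_ideal_gen_diff left_ideal_gen.lmult comm_pc23_var)
next
  case (pc222 i \<sigma>)
  define s where "s = (of_int (sign \<sigma>) :: fring)"
  have "s * s = 1" unfolding s_def by (simp flip: of_int_mult)
  then have ss: "s * (s * y) = y" for y by (simp add: mult.assoc[symmetric])
  have "comm g (var j) = comm (pc222_var i) (var j) - s * comm (pc222_var (i \<circ> \<sigma>)) (var j)"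
    unfolding pc222 s_def by (simp add: comm_def algebra_simps mult_of_int_commute)
  then have e: "comm g (var j) = (comm (pc222_var i) (var j) - (pc223_var j i + pc223_var j i + pc223_var j i))
     - s * (comm (pc222_var (i \<circ> \<sigma>)) (var j)
            - (pc223_var j (i \<circ> \<sigma>) + pc223_var j (i \<circ> \<sigma>) + pc223_var j (i \<circ> \<sigma>)))
     + (- (s + s + s)) * (pc223_var j (i \<circ> \<sigma>) - s * pc223_var j i)"
    by (simp add: algebra_simps ss)
  have r: "pc223_var j (i \<circ> \<sigma>) - s * pc223_var j i \<in> Lg"
    using pc223_var_permute[OF pc222(2), of j] unfolding perm_sign_mod_def s_def by blast
  show ?thesis
    unfolding e by (intro left_ideal_gen.add left_ideal_gen_diff left_ideal_gen.lmult comm_pc222_var r)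
qed

lemma Lg_mult_var: "g \<in> Lg \<Longrightarrow> g * var j \<in> Lg"
proof (induction rule: left_ideal_gen.induct)
  case (base a)
  have "a * var j = var j * a + comm a (var j)" by (simp add: comm_def)
  then show ?case
    using base by (simp add: left_ideal_gen.add left_ideal_gen.lmult left_ideal_gen.base comm_gens_var_in_Lg)
next
  case (lmult a r)
  then show ?case using left_ideal_gen.lmult[of "a * var j" gens r] by (simp add: mult.assoc)
qed (simp_all add: left_ideal_gen.zero left_ideal_gen.add distrib_right)

lemma Lg_mult_right: "g \<in> Lg \<Longrightarrow> g * r \<in> Lg"
proof (induction r rule: fring_induct)
  case (word_mono l)
  then show ?case
  proof (induction l arbitrary: g)
    case (Cons j l)
    then show ?case using Lg_mult_var by (simp add: word_mono_Cons mult.assoc[symmetric])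
  qed (simp add: word_mono_Nil)
qed (simp_all add: left_ideal_gen.zero left_ideal_gen_diff right_diff_distrib)

lemma two_sided_ideal_Lg: "two_sided_ideal Lg"
  by (rule two_sided_ideal_left_ideal_gen) (rule Lg_mult_right)

section \<open>The quotient by \<open>Lg\<close>: \<open>T4\<close> lies in \<open>Lg\<close>\<close>

lemma one_notin_Lg: "1 \<notin> Lg"
  using Lg_subset_T4 one_notin_T4 by blast

quotient_type qL = fring / "ideal_rel Lg"
  by (rule equivp_ideal_rel[OF two_sided_ideal_Lg])

instantiation qL :: ring_1
begin
lift_definition zero_qL :: qL is 0 .
lift_definition one_qL :: qL is 1 .
lift_definition plus_qL :: "qL \<Rightarrow> qL \<Rightarrow> qL" is "(+)" by (rule ideal_rel_plus[OF two_sided_ideal_Lg])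
lift_definition uminus_qL :: "qL \<Rightarrow> qL" is uminus by (rule ideal_rel_uminus[OF two_sided_ideal_Lg])
lift_definition minus_qL :: "qL \<Rightarrow> qL \<Rightarrow> qL" is "(-)" by (rule ideal_rel_minus[OF two_sided_ideal_Lg])
lift_definition times_qL :: "qL \<Rightarrow> qL \<Rightarrow> qL" is "(*)" by (rule ideal_rel_times[OF two_sided_ideal_Lg])
instance
proof
  fix a b c :: qL
  have eq: "ideal_rel Lg x y" if "x = y" for x y
    using that two_sided_ideal_Lg by (simp add: ideal_rel_def two_sided_ideal_def)
  show "a * b * c = a * (b * c)" by transfer (rule eq, simp add: mult.assoc)
  show "1 * a = a" by transfer (rule eq, simp)
  show "a * 1 = a" by transfer (rule eq, simp)
  show "a + b + c = a + (b + c)" by transfer (rule eq, simp add: add.assoc)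
  show "a + b = b + a" by transfer (rule eq, simp add: add.commute)
  show "0 + a = a" by transfer (rule eq, simp)
  show "- a + a = 0" by transfer (rule eq, simp)
  show "a - b = a + - b" by transfer (rule eq, simp)
  show "(a + b) * c = a * c + b * c" by transfer (rule eq, simp add: distrib_right)
  show "a * (b + c) = a * b + a * c" by transfer (rule eq, simp add: distrib_left)
  show "(0::qL) \<noteq> 1" by transfer (rule ideal_rel_zero_one[OF one_notin_Lg two_sided_ideal_Lg])
qed
end

lemma abs_qL_zero: "abs_qL 0 = 0"
  by (simp add: zero_qL_def)
lemma abs_qL_one: "abs_qL 1 = 1"
  by (simp add: one_qL_def)
lemma abs_qL_mult: "abs_qL (a * b) = abs_qL a * abs_qL b"
  by (simp add: times_qL.abs_eq)
lemma abs_qL_minus: "abs_qL (a - b) = abs_qL a - abs_qL b"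
  by (simp add: minus_qL.abs_eq)
lemma abs_qL_comm: "abs_qL (comm a b) = comm (abs_qL a) (abs_qL b)"
  by (simp add: comm_def abs_qL_mult abs_qL_minus)
lemma abs_qL_of_int: "abs_qL (of_int k) = of_int k"
  by (rule of_int_hom) (simp_all add: abs_qL_one abs_qL_minus)
lemma abs_qL_eq_0_iff: "abs_qL a = 0 \<longleftrightarrow> a \<in> Lg"
  using qL.abs_eq_iff[of a 0] by (simp add: zero_qL_def ideal_rel_def)

definition qL_vars :: "qL set" where
  "qL_vars = range (\<lambda>i. abs_qL (var i))"

lemma qL_vars_tuple:
  assumes "\<forall>k<n. y k \<in> qL_vars"
  obtains i where "\<forall>k<n. y k = abs_qL (var (i k))"
proof
  show "\<forall>k<n. y k = abs_qL (var ((\<lambda>k. SOME j. y k = abs_qL (var j)) k))"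
  proof (intro allI impI)
    fix k assume "k < n"
    then obtain j where "y k = abs_qL (var j)"
      using assms unfolding qL_vars_def by blast
    then show "y k = abs_qL (var ((\<lambda>k. SOME j. y k = abs_qL (var j)) k))"
      by (rule someI)
  qed
qed

lemma of_int_sign_mult_eq_swap:
  "(a::'a::ring_1) = of_int (sign \<sigma>) * b \<Longrightarrow> b = of_int (sign \<sigma>) * a"
  by (simp add: mult.assoc[symmetric] flip: of_int_mult)

interpretation qL_gens: generator_identities qL_vars
proof
  fix a b c d e g assume "a \<in> qL_vars" "b \<in> qL_vars" "c \<in> qL_vars" "d \<in> qL_vars" "e \<in> qL_vars" "g \<in> qL_vars"
  then obtain ia ib ic id ie ig where v: "a = abs_qL (var ia)" "b = abs_qL (var ib)" "c = abs_qL (var ic)"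
      "d = abs_qL (var id)" "e = abs_qL (var ie)" "g = abs_qL (var ig)"
    unfolding qL_vars_def by blast
  show "comm4 a b c d = 0"
    using comm4_var_in_Lg[of ia ib ic id] by (simp add: v abs_qL_comm flip: abs_qL_eq_0_iff)
  show "pc33 a b c d e g = 0"
    using left_ideal_gen.base[OF pc33_var_in_gens[of ia ib ic id ie ig]]
    by (simp add: v pc33_def abs_qL_comm abs_qL_mult flip: abs_qL_eq_0_iff)
next
  fix y :: "nat \<Rightarrow> qL" and \<sigma> :: "nat \<Rightarrow> nat"
  assume y: "\<forall>k<5. y k \<in> qL_vars" and \<sigma>: "\<sigma> permutes {..<5}"
  from y obtain i where i: "\<forall>k<5. y k = abs_qL (var (i k))" by (rule qL_vars_tuple)
  have tup: "pc23_tup y = abs_qL (pc23_var i)" "pc23_tup (y \<circ> \<sigma>) = abs_qL (pc23_var (i \<circ> \<sigma>))"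
    using i permutes_in_image[OF \<sigma>]
    by (simp_all add: pc23_tup_def pc23_def pc23_var_def abs_qL_comm abs_qL_mult)
  have "abs_qL (pc23_var i - of_int (sign \<sigma>) * pc23_var (i \<circ> \<sigma>)) = 0"
    using left_ideal_gen.base[OF pc23_var_alt_in_gens[OF \<sigma>]] by (simp only: abs_qL_eq_0_iff)
  then have "pc23_tup y = of_int (sign \<sigma>) * pc23_tup (y \<circ> \<sigma>)"
    unfolding tup abs_qL_minus abs_qL_mult abs_qL_of_int by simp
  then show "pc23_tup (y \<circ> \<sigma>) = of_int (sign \<sigma>) * pc23_tup y"
    by (rule of_int_sign_mult_eq_swap)
next
  fix y :: "nat \<Rightarrow> qL" and \<sigma> :: "nat \<Rightarrow> nat"
  assume y: "\<forall>k<6. y k \<in> qL_vars" and \<sigma>: "\<sigma> permutes {..<6}"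
  from y obtain i where i: "\<forall>k<6. y k = abs_qL (var (i k))" by (rule qL_vars_tuple)
  have tup: "pc222_tup y = abs_qL (pc222_var i)" "pc222_tup (y \<circ> \<sigma>) = abs_qL (pc222_var (i \<circ> \<sigma>))"
    using i permutes_in_image[OF \<sigma>]
    by (simp_all add: pc222_tup_def pc222_def pc222_var_def abs_qL_comm abs_qL_mult)
  have "abs_qL (pc222_var i - of_int (sign \<sigma>) * pc222_var (i \<circ> \<sigma>)) = 0"
    using left_ideal_gen.base[OF pc222_var_alt_in_gens[OF \<sigma>]] by (simp only: abs_qL_eq_0_iff)
  then have "pc222_tup y = of_int (sign \<sigma>) * pc222_tup (y \<circ> \<sigma>)"
    unfolding tup abs_qL_minus abs_qL_mult abs_qL_of_int by simp
  then show "pc222_tup (y \<circ> \<sigma>) = of_int (sign \<sigma>) * pc222_tup y"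
    by (rule of_int_sign_mult_eq_swap)
qed

lemma gword_abs_qL_word_mono: "l \<noteq> [] \<Longrightarrow> qL_gens.gword (length l) (abs_qL (word_mono l))"
proof (induction l)
  case (Cons j l)
  have x: "abs_qL (var j) \<in> qL_vars" unfolding qL_vars_def by blast
  show ?case
  proof (cases "l = []")
    case True
    then show ?thesis using qL_gens.gword_gen[OF x] by (simp add: word_mono_Cons word_mono_Nil abs_qL_mult abs_qL_one)
  next
    case False
    then show ?thesis using qL_gens.gword_Cons[OF x Cons.IH[OF False]] by (simp add: word_mono_Cons abs_qL_mult)
  qed
qed simp

lemma comm4_abs_qL_word_mono:
  "comm4 (abs_qL (word_mono l1)) (abs_qL (word_mono l2)) (abs_qL (word_mono l3)) (abs_qL (word_mono l4)) = 0"
proof (cases "l1 = [] \<or> l2 = [] \<or> l3 = [] \<or> l4 = []")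
  case False
  then show ?thesis by (blast intro: qL_gens.comm4_gwords gword_abs_qL_word_mono)
qed (auto simp: word_mono_Nil abs_qL_one)

lemma comm4_abs_qL: "comm4 (abs_qL a) (abs_qL b) (abs_qL c) (abs_qL d) = 0"
proof -
  have "comm4 (abs_qL (word_mono l1)) (abs_qL (word_mono l2)) (abs_qL (word_mono l3)) (abs_qL d) = 0"
    for l1 l2 l3
    by (induction d rule: fring_induct)
      (simp_all add: abs_qL_zero abs_qL_minus comm4_diff3 comm4_abs_qL_word_mono)
  then have "comm4 (abs_qL (word_mono l1)) (abs_qL (word_mono l2)) (abs_qL c) (abs_qL d) = 0" for l1 l2
    by (induction c rule: fring_induct) (simp_all add: abs_qL_zero abs_qL_minus comm4_diff2)
  then have "comm4 (abs_qL (word_mono l1)) (abs_qL b) (abs_qL c) (abs_qL d) = 0" for l1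
    by (induction b rule: fring_induct) (simp_all add: abs_qL_zero abs_qL_minus comm4_diff1)
  then show ?thesis
    by (induction a rule: fring_induct) (simp_all add: abs_qL_zero abs_qL_minus comm4_diff0)
qed

lemma T4_subset_Lg: "T4 \<subseteq> Lg"
proof
  fix a assume "a \<in> T4"
  then show "a \<in> Lg"
    unfolding T4_def
  proof induction
    case (base a)
    then obtain a1 a2 a3 a4 where "a = lcomm [a1, a2, a3, a4]" by blast
    moreover have "abs_qL (lcomm [a1, a2, a3, a4]) = 0"
      by (simp add: abs_qL_comm comm4_abs_qL)
    ultimately show ?case by (simp add: abs_qL_eq_0_iff)
  qed (use two_sided_ideal_Lg in \<open>simp_all add: two_sided_ideal_def\<close>)
qed

theorem lemma3p2:
  shows "T4 = left_ideal_gen gens"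
  using T4_subset_Lg Lg_subset_T4 by blast

end
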